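(* Let $n\ge 3$. Let $L$ be a complex Leibniz algebra, let $I$ be the ideal generated by all squares $[x,x]$, $x\in L$, and suppose $L/I\cong\mathfrak{e}(n)$ and $I$ has a basis $X_1,\dots,X_{n+1}$ such that, for the right $\mathfrak{e}(n)$-module structure $(i,x+I)\mapsto[i,x]$, one has $[X_i,\overline{E}_{i,j}]=X_j$ for $1\le i\ne j\le n$, $[X_i,\overline{H}_i]=X_{n+1}$ for $1\le i\le n$, and all other products of $X_1,\dots,X_{n+1}$ with the basis elements $\overline{E}_{i,j},\overline{H}_k$ of $L/I$ are zero. Then there exist preimages $E_{i,j}\in L$ ($1\le i<j\le n$) and $H_k\in L$ ($1\le k\le n$) of $\overline{E}_{i,j}$ and $\overline{H}_k$ whose linear span $\mathfrak{e}(n)\subseteq L$ is closed under the bracket of $L$ and is, with $E_{i,j}\mapsto\overline{E}_{i,j}$, $H_k\mapsto\overline{H}_k$, a subalgebra isomorphic to the Lie algebra $\mathfrak{e}(n)$; that is, $[\mathfrak{e}(n),\mathfrak{e}(n)]=\mathfrak{e}(n)$ for this span, and the brackets among these elements in $L$ are exactly those of $\mathfrak{e}(n)$.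
   Context: A (right) Leibniz algebra is a vector space $L$ with a bilinear bracket satisfying $[[x,y],z]=[[x,z],y]+[x,[y,z]]$. The ideal $I$ generated by squares satisfies $[L,I]=0$, so $L/I$ is a Lie algebra and $I$ is a right $L/I$-module via $(i,x+I)\mapsto[i,x]$. $\mathfrak{e}(n)$ is the complex Lie algebra with basis $\{\overline{E}_{i,j}\ (1\le i<j\le n),\ \overline{H}_k\ (1\le k\le n)\}$; setting $\overline{E}_{j,i}=-\overline{E}_{i,j}$, its nonzero brackets are $[\overline{E}_{i,j},\overline{E}_{j,k}]=\overline{E}_{i,k}$, $[\overline{E}_{i,j},\overline{H}_j]=\overline{H}_i$, $[\overline{E}_{i,j},\overline{H}_i]=-\overline{H}_j$ (matrix realization in $\mathfrak{gl}_{n+1}(\mathbb C)$: $\overline{E}_{i,j}=e_{i,j}-e_{j,i}$, $\overline{H}_k=e_{k,n+1}$); the module above is right multiplication of row vectors, $X_i$ corresponding to the $i$-th standard row vector. *)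

theory Defs
  imports Complex_Main
begin

text \<open>A (right) Leibniz algebra is such a space with a bilinear bracket br satisfying
  br (br x y) z = br (br x z) y + br x (br y z).\<close>

definition leibniz_algebra :: "(complex \<Rightarrow> 'a::ab_group_add \<Rightarrow> 'a) \<Rightarrow> ('a \<Rightarrow> 'a \<Rightarrow> 'a) \<Rightarrow> bool" where
  "leibniz_algebra scale br \<longleftrightarrow>
     vector_space scale \<and>
     (\<forall>x y z. br (x + y) z = br x z + br y z) \<and>
     (\<forall>x y z. br x (y + z) = br x y + br x z) \<and>
     (\<forall>c x y. br (scale c x) y = scale c (br x y)) \<and>
     (\<forall>c x y. br x (scale c y) = scale c (br x y)) \<and>
     (\<forall>x y z. br (br x y) z = br (br x z) y + br x (br y z))"

definition is_ideal :: "(complex \<Rightarrow> 'a::ab_group_add \<Rightarrow> 'a) \<Rightarrow> ('a \<Rightarrow> 'a \<Rightarrow> 'a) \<Rightarrow> 'a set \<Rightarrow> bool" where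
  "is_ideal scale br S \<longleftrightarrow> module.subspace scale S \<and> (\<forall>x\<in>S. \<forall>y. br x y \<in> S \<and> br y x \<in> S)"

definition square_ideal :: "(complex \<Rightarrow> 'a::ab_group_add \<Rightarrow> 'a) \<Rightarrow> ('a \<Rightarrow> 'a \<Rightarrow> 'a) \<Rightarrow> 'a set" where
  "square_ideal scale br = \<Inter>{S. is_ideal scale br S \<and> (\<forall>x. br x x \<in> S)}"

definition ext_E :: "(nat \<Rightarrow> nat \<Rightarrow> 'a::ab_group_add) \<Rightarrow> nat \<Rightarrow> nat \<Rightarrow> 'a" where
  "ext_E E i j = (if i < j then E i j else if j < i then - E j i else 0)"

text \<open>The full multiplication table of e(n) on its basis (E i j, 1 \<le> i < j \<le> n; H k, 1 \<le> k \<le> n),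
  with each equation "lhs = rhs" replaced by "R lhs rhs". It is the commutator table of the
  matrix realization E i j = e_ij - e_ji, H k = e_(k,n+1) in gl_(n+1), i.e. the brackets
  [E_ij,E_jk]=E_ik, [E_ij,H_j]=H_i, [E_ij,H_i]=-H_j, extended by antisymmetry, all others 0.\<close>
definition e_table :: "nat \<Rightarrow> ('a \<Rightarrow> 'a \<Rightarrow> bool) \<Rightarrow> ('a::ab_group_add \<Rightarrow> 'a \<Rightarrow> 'a)
    \<Rightarrow> (nat \<Rightarrow> nat \<Rightarrow> 'a) \<Rightarrow> (nat \<Rightarrow> 'a) \<Rightarrow> bool" where
  "e_table n R br E H \<longleftrightarrow>
     (\<forall>i j k l. 1 \<le> i \<and> i < j \<and> j \<le> n \<and> 1 \<le> k \<and> k < l \<and> l \<le> n \<longrightarrow>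
        R (br (E i j) (E k l))
          ((if j = k then ext_E E i l else 0) - (if j = l then ext_E E i k else 0)
           - (if i = k then ext_E E j l else 0) + (if i = l then ext_E E j k else 0))) \<and>
     (\<forall>i j k. 1 \<le> i \<and> i < j \<and> j \<le> n \<and> 1 \<le> k \<and> k \<le> n \<longrightarrow>
        R (br (E i j) (H k)) ((if j = k then H i else 0) - (if i = k then H j else 0))) \<and>
     (\<forall>i j k. 1 \<le> i \<and> i < j \<and> j \<le> n \<and> 1 \<le> k \<and> k \<le> n \<longrightarrow>
        R (br (H k) (E i j)) ((if i = k then H j else 0) - (if j = k then H i else 0))) \<and>
     (\<forall>k l. 1 \<le> k \<and> k \<le> n \<and> 1 \<le> l \<and> l \<le> n \<longrightarrow> R (br (H k) (H l)) 0)"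

definition e_pairs :: "nat \<Rightarrow> (nat \<times> nat) set" where
  "e_pairs n = {(i, j). 1 \<le> i \<and> i < j \<and> j \<le> n}"

end

theory Submission
  imports Defs
begin

text \<open>Since [L, I] = 0, the bracket of L sees its right argument only modulo I, and every
  correction of a lift by an element of I is invisible from the right. Start from arbitrary
  lifts E, H of the basis of L/I; each defect, i.e. the difference between a bracket of lifts
  and the value prescribed by the table of e(n), lies in I. The invariants of the module I form
  the line spanned by X (n+1); this line is killed by brackets from both sides, and an element of
  I lies on it as soon as all H k kill it. Since the lifts are independent modulo I, an element
  of I that is a combination of lifts vanishes. Applying the Leibniz identity to triple brackets of
  lifts and using n \<ge> 3 to find a third index, one shows, defect by defect in the order
  [H,H], [H,E], [E,H], [E,E], that the defect lies on this line and is of the shape of the table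
  itself, so that it is absorbed by modifying the lifts within I. Once all defects vanish, the span
  of the lifts is closed under the bracket.\<close>

definition ee_rhs :: "(nat \<Rightarrow> nat \<Rightarrow> 'a::ab_group_add) \<Rightarrow> nat \<Rightarrow> nat \<Rightarrow> nat \<Rightarrow> nat \<Rightarrow> 'a" where
  "ee_rhs f i j k l = (if j = k then f i l else 0) - (if j = l then f i k else 0)
     - (if i = k then f j l else 0) + (if i = l then f j k else 0)"

definition eh_rhs :: "(nat \<Rightarrow> 'a::ab_group_add) \<Rightarrow> nat \<Rightarrow> nat \<Rightarrow> nat \<Rightarrow> 'a" where
  "eh_rhs f i j k = (if j = k then f i else 0) - (if i = k then f j else 0)"

lemma e_table_iff:
  "e_table n R br E H \<longleftrightarrow>
     (\<forall>i j k l. 1 \<le> i \<and> i < j \<and> j \<le> n \<and> 1 \<le> k \<and> k < l \<and> l \<le> n \<longrightarrow>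
        R (br (E i j) (E k l)) (ee_rhs (ext_E E) i j k l)) \<and>
     (\<forall>i j k. 1 \<le> i \<and> i < j \<and> j \<le> n \<and> 1 \<le> k \<and> k \<le> n \<longrightarrow>
        R (br (E i j) (H k)) (eh_rhs H i j k)) \<and>
     (\<forall>i j k. 1 \<le> i \<and> i < j \<and> j \<le> n \<and> 1 \<le> k \<and> k \<le> n \<longrightarrow>
        R (br (H k) (E i j)) (- eh_rhs H i j k)) \<and>
     (\<forall>k l. 1 \<le> k \<and> k \<le> n \<and> 1 \<le> l \<and> l \<le> n \<longrightarrow> R (br (H k) (H l)) 0)"
  by (simp add: e_table_def ee_rhs_def eh_rhs_def)

lemma ee_rhs_add: "ee_rhs (\<lambda>a b. f a b + g a b) i j k l = ee_rhs f i j k l + ee_rhs g i j k l"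
  by (simp add: ee_rhs_def algebra_simps)

lemma eh_rhs_add: "eh_rhs (\<lambda>a. f a + g a) i j k = eh_rhs f i j k + eh_rhs g i j k"
  by (simp add: eh_rhs_def algebra_simps)

lemma ee_rhs_diff: "ee_rhs (\<lambda>a b. f a b - g a b) i j k l = ee_rhs f i j k l - ee_rhs g i j k l"
  by (simp add: ee_rhs_def algebra_simps)

lemma eh_rhs_diff: "eh_rhs (\<lambda>a. f a - g a) i j k = eh_rhs f i j k - eh_rhs g i j k"
  by (simp add: eh_rhs_def algebra_simps)

lemma (in additive) ee_rhs: "f (ee_rhs g i j k l) = ee_rhs (\<lambda>a b. f (g a b)) i j k l"
  by (simp add: ee_rhs_def add diff zero)

lemma (in additive) eh_rhs: "f (eh_rhs g i j k) = eh_rhs (\<lambda>a. f (g a)) i j k"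
  by (simp add: eh_rhs_def diff zero)

lemma ee_rhs_swap_left: "ee_rhs f b a c d = - ee_rhs f a b c d"
  by (simp add: ee_rhs_def)

lemma ee_rhs_swap_right: "ee_rhs f a b d c = - ee_rhs f a b c d"
  by (simp add: ee_rhs_def)

lemma eh_rhs_swap: "eh_rhs f b a k = - eh_rhs f a b k"
  by (simp add: eh_rhs_def)

lemma ee_rhs_cong:
  "(\<And>x y. x \<in> A \<Longrightarrow> y \<in> A \<Longrightarrow> f x y = g x y) \<Longrightarrow> a \<in> A \<Longrightarrow> b \<in> A \<Longrightarrow> c \<in> A \<Longrightarrow> d \<in> A \<Longrightarrow>
    ee_rhs f a b c d = ee_rhs g a b c d"
  by (simp add: ee_rhs_def)

lemma eh_rhs_cong:
  "(\<And>x. x \<in> A \<Longrightarrow> f x = g x) \<Longrightarrow> a \<in> A \<Longrightarrow> b \<in> A \<Longrightarrow> eh_rhs f a b k = eh_rhs g a b k"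
  by (simp add: eh_rhs_def)

lemma eh_rhs_same [simp]: "eh_rhs f a a k = 0"
  by (simp add: eh_rhs_def)

lemma ext_E_same [simp]: "ext_E f a a = 0"
  by (simp add: ext_E_def)

lemma ext_E_swap: "ext_E f b a = - ext_E f a b"
  by (simp add: ext_E_def)

lemma ext_E_add: "ext_E (\<lambda>a b. f a b + g a b) x y = ext_E f x y + ext_E g x y"
  by (simp add: ext_E_def)

context module
begin

lemma ee_rhs_in_subspace:
  assumes "subspace S" and "\<And>x y. x \<in> A \<Longrightarrow> y \<in> A \<Longrightarrow> f x y \<in> S"
    and "a \<in> A" "b \<in> A" "c \<in> A" "d \<in> A"
  shows "ee_rhs f a b c d \<in> S"
  unfolding ee_rhs_def using assms
  by (intro subspace_add subspace_diff) (auto simp: subspace_0)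

lemma eh_rhs_in_subspace:
  assumes "subspace S" and "\<And>x. x \<in> A \<Longrightarrow> f x \<in> S" and "a \<in> A" "b \<in> A"
  shows "eh_rhs f a b k \<in> S"
  unfolding eh_rhs_def using assms
  by (intro subspace_diff) (auto simp: subspace_0)

lemma span_image_finite:
  assumes "finite A"
  shows "span (f ` A) = range (\<lambda>c. \<Sum>a\<in>A. c a *s f a)"
proof
  show "range (\<lambda>c. \<Sum>a\<in>A. c a *s f a) \<subseteq> span (f ` A)"
    by (auto intro!: span_sum span_scale intro: span_base)
  have "f a \<in> range (\<lambda>c. \<Sum>a\<in>A. c a *s f a)" if "a \<in> A" for a
  proof
    have "(\<Sum>b\<in>A. (if b = a then 1 else 0) *s f b) = (\<Sum>b\<in>A. if b = a then f b else 0)"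
      by (rule sum.cong) simp_all
    then show "f a = (\<Sum>b\<in>A. (if b = a then 1 else 0) *s f b)"
      using that assms by simp
  qed simp
  moreover have "subspace (range (\<lambda>c. \<Sum>a\<in>A. c a *s f a))"
    unfolding subspace_def
  proof (intro conjI ballI allI)
    show "0 \<in> range (\<lambda>c. \<Sum>a\<in>A. c a *s f a)"
      by (rule image_eqI[of _ _ "\<lambda>_. 0"]) simp_all
    show "x + y \<in> range (\<lambda>c. \<Sum>a\<in>A. c a *s f a)"
      if "x \<in> range (\<lambda>c. \<Sum>a\<in>A. c a *s f a)" "y \<in> range (\<lambda>c. \<Sum>a\<in>A. c a *s f a)" for x y
      using that by (auto simp: scale_left_distrib sum.distrib intro!: image_eqI[of _ _ "\<lambda>a. _ a + _ a"])
    show "r *s x \<in> range (\<lambda>c. \<Sum>a\<in>A. c a *s f a)"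
      if "x \<in> range (\<lambda>c. \<Sum>a\<in>A. c a *s f a)" for r x
      using that by (auto simp: scale_sum_right intro!: image_eqI[of _ _ "\<lambda>a. r * _ a"])
  qed
  ultimately show "span (f ` A) \<subseteq> range (\<lambda>c. \<Sum>a\<in>A. c a *s f a)"
    by (intro span_minimal) auto
qed

lemma antisymmetric_in_subspace:
  fixes f :: "'i::linorder \<Rightarrow> 'i \<Rightarrow> 'b"
  assumes "subspace S" and "\<And>a b. f b a = - f a b" and "\<And>a. f a a = 0"
    and "\<And>a b. a < b \<Longrightarrow> a \<in> A \<Longrightarrow> b \<in> A \<Longrightarrow> f a b \<in> S"
    and "a \<in> A" "b \<in> A"
  shows "f a b \<in> S"
proof (cases a b rule: linorder_cases)
  case less
  then show ?thesis using assms(4-6) by blast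
next
  case equal
  then show ?thesis using assms(1,3) subspace_0 by simp
next
  case greater
  then have "f b a \<in> S" using assms(4-6) by blast
  then have "- f b a \<in> S" by (rule subspace_neg[OF assms(1)])
  then show ?thesis using assms(2)[of b a] by simp
qed

end

lemma (in vector_space) double_eq_zero:
  fixes v :: 'b
  assumes "v + v = 0" and "(2::'a) \<noteq> 0"
  shows "v = 0"
proof -
  have "scale 2 v = v + v"
    by (metis one_add_one scale_left_distrib scale_one)
  then show ?thesis using assms by simp
qed

locale leibniz_alg =
  fixes scale :: "complex \<Rightarrow> 'a::ab_group_add \<Rightarrow> 'a"
    and br :: "'a \<Rightarrow> 'a \<Rightarrow> 'a"
  assumes leibniz_algebra: "leibniz_algebra scale br"
begin

sublocale vs: vector_space scale
  using leibniz_algebra unfolding leibniz_algebra_def by blast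

abbreviation I :: "'a set" where "I \<equiv> square_ideal scale br"

lemma additive_bracket_left: "additive (\<lambda>x. br x z)"
  using leibniz_algebra unfolding leibniz_algebra_def additive_def by blast

lemma additive_bracket_right: "additive (\<lambda>y. br x y)"
  using leibniz_algebra unfolding leibniz_algebra_def additive_def by blast

lemma bracket_scale_left: "br (scale c x) y = scale c (br x y)"
  using leibniz_algebra unfolding leibniz_algebra_def by blast

lemma bracket_scale_right: "br x (scale c y) = scale c (br x y)"
  using leibniz_algebra unfolding leibniz_algebra_def by blast

lemma leibniz: "br (br x y) z = br (br x z) y + br x (br y z)"
  using leibniz_algebra unfolding leibniz_algebra_def by blast

lemmas bracket_add_left = additive.add[OF additive_bracket_left]
  and bracket_diff_left = additive.diff[OF additive_bracket_left]
  and bracket_minus_left = additive.minus[OF additive_bracket_left]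
  and bracket_zero_left [simp] = additive.zero[OF additive_bracket_left]
  and bracket_sum_left = additive.sum[OF additive_bracket_left]
  and bracket_ee_rhs_left = additive.ee_rhs[OF additive_bracket_left]
  and bracket_eh_rhs_left = additive.eh_rhs[OF additive_bracket_left]
  and bracket_add_right = additive.add[OF additive_bracket_right]
  and bracket_diff_right = additive.diff[OF additive_bracket_right]
  and bracket_minus_right = additive.minus[OF additive_bracket_right]
  and bracket_zero_right [simp] = additive.zero[OF additive_bracket_right]
  and bracket_ee_rhs_right = additive.ee_rhs[OF additive_bracket_right]
  and bracket_eh_rhs_right = additive.eh_rhs[OF additive_bracket_right]

lemma double_eq_zero: "(v::'a) + v = 0 \<Longrightarrow> v = 0"
  by (rule vs.double_eq_zero) simp_all

lemma square_ideal_subspace: "vs.subspace I"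
  unfolding square_ideal_def is_ideal_def by (rule vs.subspace_Inter) blast

lemmas square_ideal_zero [simp] = vs.subspace_0[OF square_ideal_subspace]
  and square_ideal_add = vs.subspace_add[OF square_ideal_subspace]
  and square_ideal_diff = vs.subspace_diff[OF square_ideal_subspace]
  and square_ideal_neg = vs.subspace_neg[OF square_ideal_subspace]

lemma square_ideal_bracket_left: "i \<in> I \<Longrightarrow> br i y \<in> I"
  unfolding square_ideal_def is_ideal_def by blast

text \<open>The elements z with br x z = 0 for all x form an ideal containing all squares, by the
  Leibniz identity.\<close>
lemma bracket_square_ideal_right:
  assumes "i \<in> I"
  shows "br x i = 0"
proof -
  let ?Z = "{z. \<forall>x. br x z = 0}"
  have "br w (br z y) = 0" if "z \<in> ?Z" for w z y
    using leibniz[of w z y] that by simp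
  moreover have "vs.subspace ?Z"
    unfolding vs.subspace_def by (auto simp: bracket_add_right bracket_scale_right)
  ultimately have "is_ideal scale br ?Z"
    unfolding is_ideal_def by simp
  moreover have "br w w \<in> ?Z" for w
  proof -
    have "br x (br w w) = 0" for x
      using leibniz[of x w w] by simp
    then show ?thesis by simp
  qed
  ultimately have "I \<subseteq> ?Z"
    unfolding square_ideal_def by (intro Inter_lower) simp
  with assms have "i \<in> ?Z" by (rule subsetD[rotated])
  then show ?thesis by simp
qed

lemma bracket_cong_right:
  assumes "y - y' \<in> I"
  shows "br x y = br x y'"
proof -
  have "br x y - br x y' = 0"
    using bracket_square_ideal_right[OF assms, of x] by (simp only: bracket_diff_right)
  then show ?thesis by simp
qed

lemma bracket_span_closed:
  assumes "\<And>x y. x \<in> S \<Longrightarrow> y \<in> S \<Longrightarrow> br x y \<in> vs.span S"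
    and "x \<in> vs.span S" "y \<in> vs.span S"
  shows "br x y \<in> vs.span S"
proof -
  have "br x g \<in> vs.span S" if "g \<in> S" for g
    using assms(2)
  proof (induction rule: vs.span_induct)
    case base
    show ?case unfolding vs.subspace_def
      by (auto simp: bracket_add_left bracket_scale_left vs.span_zero vs.span_add vs.span_scale)
  qed (use assms(1) that in blast)
  with assms(3) show ?thesis
  proof (induction rule: vs.span_induct)
    case base
    show ?case unfolding vs.subspace_def
      by (auto simp: bracket_add_right bracket_scale_right vs.span_zero vs.span_add vs.span_scale)
  qed blast
qed

end

definition defect_EE :: "('a \<Rightarrow> 'a \<Rightarrow> 'a) \<Rightarrow> (nat \<Rightarrow> nat \<Rightarrow> 'a::ab_group_add) \<Rightarrow> nat \<Rightarrow> nat \<Rightarrow> nat \<Rightarrow> nat \<Rightarrow> 'a"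
  where "defect_EE br e a b c d = br (ext_E e a b) (ext_E e c d) - ee_rhs (ext_E e) a b c d"

definition defect_EH :: "('a \<Rightarrow> 'a \<Rightarrow> 'a) \<Rightarrow> (nat \<Rightarrow> nat \<Rightarrow> 'a::ab_group_add) \<Rightarrow> (nat \<Rightarrow> 'a) \<Rightarrow> nat \<Rightarrow> nat \<Rightarrow> nat \<Rightarrow> 'a"
  where "defect_EH br e h a b k = br (ext_E e a b) (h k) - eh_rhs h a b k"

definition defect_HE :: "('a \<Rightarrow> 'a \<Rightarrow> 'a) \<Rightarrow> (nat \<Rightarrow> nat \<Rightarrow> 'a::ab_group_add) \<Rightarrow> (nat \<Rightarrow> 'a) \<Rightarrow> nat \<Rightarrow> nat \<Rightarrow> nat \<Rightarrow> 'a"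
  where "defect_HE br e h k a b = br (h k) (ext_E e a b) + eh_rhs h a b k"

locale e_extension = leibniz_alg +
  fixes n :: nat and Eb :: "nat \<Rightarrow> nat \<Rightarrow> 'a" and Hb :: "nat \<Rightarrow> 'a" and X :: "nat \<Rightarrow> 'a"
  assumes n3: "n \<ge> 3"
    and quot_span: "vs.span ((\<lambda>(i, j). Eb i j) ` e_pairs n \<union> Hb ` {1..n} \<union> I) = UNIV"
    and quot_indep: "\<And>c d. (\<Sum>(i, j)\<in>e_pairs n. scale (c i j) (Eb i j))
                       + (\<Sum>k\<in>{1..n}. scale (d k) (Hb k)) \<in> I
                     \<Longrightarrow> (\<forall>(i, j)\<in>e_pairs n. c i j = 0) \<and> (\<forall>k\<in>{1..n}. d k = 0)"
    and quot_table: "e_table n (\<lambda>x y. x - y \<in> I) br Eb Hb"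
    and X_span: "vs.span (X ` {1..n+1}) = I"
    and X_top_nonzero: "X (n + 1) \<noteq> 0"
    and X_E: "\<And>m i j. 1 \<le> m \<Longrightarrow> m \<le> n + 1 \<Longrightarrow> (i, j) \<in> e_pairs n \<Longrightarrow>
               br (X m) (Eb i j) = (if m = i then X j else if m = j then - X i else 0)"
    and X_H: "\<And>m k. 1 \<le> m \<Longrightarrow> m \<le> n + 1 \<Longrightarrow> 1 \<le> k \<Longrightarrow> k \<le> n \<Longrightarrow>
               br (X m) (Hb k) = (if m = k then X (n + 1) else 0)"
begin

abbreviation Xtop :: 'a where "Xtop \<equiv> X (Suc n)"

lemma finite_e_pairs: "finite (e_pairs n)"
  by (rule finite_subset[of _ "{1..n} \<times> {1..n}"]) (auto simp: e_pairs_def)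

lemma X_in_square_ideal: "m \<in> {1..n+1} \<Longrightarrow> X m \<in> I"
  unfolding X_span[symmetric] by (rule vs.span_base) simp

lemma square_ideal_coords:
  assumes "v \<in> I"
  obtains c where "v = (\<Sum>m\<in>{1..n+1}. scale (c m) (X m))"
  using assms unfolding X_span[symmetric] vs.span_image_finite[OF finite_atLeastAtMost] by blast

lemma bracket_X_combination_Hb:
  assumes "A \<subseteq> {1..n+1}" and "k \<in> A" and "k \<in> {1..n}"
  shows "br (\<Sum>m\<in>A. scale (c m) (X m)) (Hb k) = scale (c k) Xtop"
proof -
  have "br (\<Sum>m\<in>A. scale (c m) (X m)) (Hb k) = (\<Sum>m\<in>A. scale (c m) (br (X m) (Hb k)))"
    by (simp add: bracket_sum_left bracket_scale_left)
  also have "\<dots> = (\<Sum>m\<in>A. if m = k then scale (c m) Xtop else 0)"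
    by (rule sum.cong) (use assms X_H in auto)
  also have "\<dots> = scale (c k) Xtop"
    using assms finite_subset[OF assms(1)] by simp
  finally show ?thesis .
qed

lemma bracket_Xtop_left: "br Xtop y = 0"
proof -
  have "y \<in> vs.span ((\<lambda>(i, j). Eb i j) ` e_pairs n \<union> Hb ` {1..n} \<union> I)"
    using quot_span by simp
  then show ?thesis
  proof (induction rule: vs.span_induct)
    case base
    show ?case unfolding vs.subspace_def by (auto simp: bracket_add_right bracket_scale_right)
  next
    case (step y)
    then show ?case
      using X_E[of "Suc n"] X_H[of "Suc n"] bracket_square_ideal_right
      by (auto simp: e_pairs_def)
  qed
qed

text \<open>The invariants of the e(n)-module I; by its module structure they are the multiples of
  X (n+1).\<close>
definition invariants :: "'a set" where
  "invariants = vs.span {Xtop}"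

lemma invariants_subspace: "vs.subspace invariants"
  unfolding invariants_def by simp

lemma invariants_subset_square_ideal: "invariants \<subseteq> I"
  unfolding invariants_def using X_in_square_ideal[of "Suc n"] square_ideal_subspace
  by (intro vs.span_minimal) auto

lemma bracket_invariants_left: "v \<in> invariants \<Longrightarrow> br v y = 0"
  unfolding invariants_def vs.span_singleton by (auto simp: bracket_scale_left bracket_Xtop_left)

lemma invariantsI:
  assumes "v \<in> I" and "\<And>k. k \<in> {1..n} \<Longrightarrow> br v (Hb k) = 0"
  shows "v \<in> invariants"
proof -
  obtain c where c: "v = (\<Sum>m\<in>{1..n+1}. scale (c m) (X m))"
    using square_ideal_coords[OF assms(1)] .
  have "c k = 0" if "k \<in> {1..n}" for k
    using assms(2)[OF that] bracket_X_combination_Hb[of "{1..n+1}" k c] that X_top_nonzero c by auto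
  then have "v = (\<Sum>m\<in>{1..n+1}. if m = Suc n then scale (c m) (X m) else 0)"
    unfolding c by (intro sum.cong) auto
  also have "\<dots> = scale (c (Suc n)) Xtop" by simp
  finally show ?thesis unfolding invariants_def vs.span_singleton by auto
qed

lemma bracket_Hb_invariant:
  assumes "v \<in> I" and "k \<in> {1..n}"
  shows "br v (Hb k) \<in> invariants"
proof -
  obtain c where "v = (\<Sum>m\<in>{1..n+1}. scale (c m) (X m))"
    using square_ideal_coords[OF assms(1)] .
  then have "br v (Hb k) = scale (c k) Xtop"
    using bracket_X_combination_Hb[of "{1..n+1}" k c] assms(2) by auto
  then show ?thesis unfolding invariants_def vs.span_singleton by auto
qed

definition top_coeff :: "'a \<Rightarrow> complex" where
  "top_coeff v = (SOME c. v = scale c Xtop)"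

lemma scale_top_coeff: "v \<in> invariants \<Longrightarrow> scale (top_coeff v) Xtop = v"
  unfolding invariants_def vs.span_singleton top_coeff_def by (metis (mono_tags) rangeE someI)

text \<open>Subtracting this combination of X 1, ..., X n from a lift changes its brackets from the right
  with Hb k exactly by the invariant c k \<cdot> X (n+1); this is how defects are cancelled.\<close>
lemma bracket_correction_Hb:
  assumes "k \<in> {1..n}"
  shows "br (v - (\<Sum>l\<in>{1..n}. scale (c l) (X l))) (Hb k) = br v (Hb k) - scale (c k) Xtop"
  using bracket_X_combination_Hb[of "{1..n}" k c] assms by (simp add: bracket_diff_left)

lemma correction_in_square_ideal: "(\<Sum>l\<in>{1..n}. scale (c l) (X l)) \<in> I"
  using X_in_square_ideal by (intro vs.subspace_sum[OF square_ideal_subspace] vs.subspace_scale[OF square_ideal_subspace]) auto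

definition third :: "nat \<Rightarrow> nat \<Rightarrow> nat" where
  "third a b = (SOME c. c \<in> {1..n} \<and> c \<noteq> a \<and> c \<noteq> b)"

lemma third: "third a b \<in> {1..n}" "third a b \<noteq> a" "third a b \<noteq> b"
proof -
  have "\<exists>c. c \<in> {1..n} \<and> c \<noteq> a \<and> c \<noteq> b"
  proof -
    consider "1 \<noteq> a" "1 \<noteq> b" | "2 \<noteq> a" "2 \<noteq> b" | "3 \<noteq> a" "3 \<noteq> b" by arith
    then show ?thesis
      by cases (use n3 in \<open>force intro: exI[of _ 1] exI[of _ 2] exI[of _ 3]\<close>)+
  qed
  then have "third a b \<in> {1..n} \<and> third a b \<noteq> a \<and> third a b \<noteq> b"
    unfolding third_def by (rule someI_ex)
  then show "third a b \<in> {1..n}" "third a b \<noteq> a" "third a b \<noteq> b" by auto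
qed

lemma quot_EE: "i < j \<Longrightarrow> i \<in> {1..n} \<Longrightarrow> j \<in> {1..n} \<Longrightarrow> k < l \<Longrightarrow> k \<in> {1..n} \<Longrightarrow> l \<in> {1..n} \<Longrightarrow>
    br (Eb i j) (Eb k l) - ee_rhs (ext_E Eb) i j k l \<in> I"
  using quot_table unfolding e_table_iff by auto

lemma quot_EH: "i < j \<Longrightarrow> i \<in> {1..n} \<Longrightarrow> j \<in> {1..n} \<Longrightarrow> k \<in> {1..n} \<Longrightarrow>
    br (Eb i j) (Hb k) - eh_rhs Hb i j k \<in> I"
  using quot_table unfolding e_table_iff by auto

lemma quot_HE: "i < j \<Longrightarrow> i \<in> {1..n} \<Longrightarrow> j \<in> {1..n} \<Longrightarrow> k \<in> {1..n} \<Longrightarrow>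
    br (Hb k) (Eb i j) + eh_rhs Hb i j k \<in> I"
  using quot_table unfolding e_table_iff by auto

lemma quot_HH: "k \<in> {1..n} \<Longrightarrow> l \<in> {1..n} \<Longrightarrow> br (Hb k) (Hb l) \<in> I"
  using quot_table unfolding e_table_iff by auto

definition HH_exact :: "(nat \<Rightarrow> 'a) \<Rightarrow> bool" where
  "HH_exact h \<longleftrightarrow> (\<forall>k\<in>{1..n}. \<forall>l\<in>{1..n}. br (h k) (h l) = 0)"

definition HE_exact :: "(nat \<Rightarrow> nat \<Rightarrow> 'a) \<Rightarrow> (nat \<Rightarrow> 'a) \<Rightarrow> bool" where
  "HE_exact e h \<longleftrightarrow> (\<forall>k\<in>{1..n}. \<forall>a\<in>{1..n}. \<forall>b\<in>{1..n}. defect_HE br e h k a b = 0)"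

definition EH_exact :: "(nat \<Rightarrow> nat \<Rightarrow> 'a) \<Rightarrow> (nat \<Rightarrow> 'a) \<Rightarrow> bool" where
  "EH_exact e h \<longleftrightarrow> (\<forall>a\<in>{1..n}. \<forall>b\<in>{1..n}. \<forall>k\<in>{1..n}. defect_EH br e h a b k = 0)"

definition EE_exact :: "(nat \<Rightarrow> nat \<Rightarrow> 'a) \<Rightarrow> bool" where
  "EE_exact e \<longleftrightarrow> (\<forall>a\<in>{1..n}. \<forall>b\<in>{1..n}. \<forall>c\<in>{1..n}. \<forall>d\<in>{1..n}. defect_EE br e a b c d = 0)"

end

locale e_lifts = e_extension +
  fixes e :: "nat \<Rightarrow> nat \<Rightarrow> 'a" and h :: "nat \<Rightarrow> 'a"
  assumes e_lift: "(i, j) \<in> e_pairs n \<Longrightarrow> e i j - Eb i j \<in> I"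
    and h_lift: "k \<in> {1..n} \<Longrightarrow> h k - Hb k \<in> I"
begin

abbreviation E' :: "nat \<Rightarrow> nat \<Rightarrow> 'a" where "E' \<equiv> ext_E e"
abbreviation dEE :: "nat \<Rightarrow> nat \<Rightarrow> nat \<Rightarrow> nat \<Rightarrow> 'a" where "dEE \<equiv> defect_EE br e"
abbreviation dEH :: "nat \<Rightarrow> nat \<Rightarrow> nat \<Rightarrow> 'a" where "dEH \<equiv> defect_EH br e h"
abbreviation dHE :: "nat \<Rightarrow> nat \<Rightarrow> nat \<Rightarrow> 'a" where "dHE \<equiv> defect_HE br e h"
abbreviation dHH :: "nat \<Rightarrow> nat \<Rightarrow> 'a" where "dHH k l \<equiv> br (h k) (h l)"

lemma ext_E_lift:
  assumes "a \<in> {1..n}" "b \<in> {1..n}"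
  shows "E' a b - ext_E Eb a b \<in> I"
proof (cases a b rule: linorder_cases)
  case less
  then show ?thesis using assms e_lift[of a b] by (simp add: ext_E_def e_pairs_def)
next
  case greater
  then have "E' a b - ext_E Eb a b = - (e b a - Eb b a)" by (simp add: ext_E_def)
  moreover have "- (e b a - Eb b a) \<in> I"
    using greater assms e_lift[of b a] by (intro square_ideal_neg) (simp add: e_pairs_def)
  ultimately show ?thesis by simp
qed simp

lemma bracket_E_right: "a \<in> {1..n} \<Longrightarrow> b \<in> {1..n} \<Longrightarrow> br x (E' a b) = br x (ext_E Eb a b)"
  using ext_E_lift bracket_cong_right by blast

lemma bracket_h_right: "k \<in> {1..n} \<Longrightarrow> br x (h k) = br x (Hb k)"
  using h_lift bracket_cong_right by blast

lemma bracket_E_E: "br (E' a b) (E' c d) = dEE a b c d + ee_rhs E' a b c d"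
  by (simp add: defect_EE_def)

lemma bracket_E_h: "br (E' a b) (h k) = dEH a b k + eh_rhs h a b k"
  by (simp add: defect_EH_def)

lemma bracket_h_E: "br (h k) (E' a b) = dHE k a b - eh_rhs h a b k"
  by (simp add: defect_HE_def)

lemma dEE_swap_left: "dEE b a c d = - dEE a b c d"
  by (simp add: defect_EE_def ext_E_swap[of e b a] ee_rhs_swap_left[of E' b a] bracket_minus_left)

lemma dEE_swap_right: "dEE a b d c = - dEE a b c d"
  by (simp add: defect_EE_def ext_E_swap[of e d c] ee_rhs_swap_right[of E' a b d c] bracket_minus_right)

lemma dEH_swap: "dEH b a k = - dEH a b k"
  by (simp add: defect_EH_def ext_E_swap[of e b a] eh_rhs_swap[of h b a] bracket_minus_left)

lemma dHE_swap: "dHE k b a = - dHE k a b"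
  by (simp add: defect_HE_def ext_E_swap[of e b a] eh_rhs_swap[of h b a] bracket_minus_right)

lemma dEE_same_left [simp]: "dEE a a c d = 0"
  by (simp add: defect_EE_def ee_rhs_def)

lemma dEE_same_right [simp]: "dEE a b c c = 0"
  by (simp add: defect_EE_def ee_rhs_def)

lemma dEH_same [simp]: "dEH a a k = 0"
  by (simp add: defect_EH_def)

lemma dHE_same [simp]: "dHE k a a = 0"
  by (simp add: defect_HE_def)

lemma eh_rhs_lift_in_square_ideal: "a \<in> {1..n} \<Longrightarrow> b \<in> {1..n} \<Longrightarrow> eh_rhs h a b k - eh_rhs Hb a b k \<in> I"
  unfolding eh_rhs_diff[symmetric] using h_lift
  by (intro vs.eh_rhs_in_subspace[OF square_ideal_subspace])

lemma ee_rhs_lift_in_square_ideal: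
  "a \<in> {1..n} \<Longrightarrow> b \<in> {1..n} \<Longrightarrow> c \<in> {1..n} \<Longrightarrow> d \<in> {1..n} \<Longrightarrow>
    ee_rhs E' a b c d - ee_rhs (ext_E Eb) a b c d \<in> I"
  unfolding ee_rhs_diff[symmetric] using ext_E_lift
  by (intro vs.ee_rhs_in_subspace[OF square_ideal_subspace])

lemma dHH_in_square_ideal:
  assumes "k \<in> {1..n}" "l \<in> {1..n}"
  shows "dHH k l \<in> I"
proof -
  have "dHH k l = br (h k - Hb k) (Hb l) + br (Hb k) (Hb l)"
    using bracket_h_right[OF assms(2)] by (simp add: bracket_diff_left)
  also have "\<dots> \<in> I"
    using assms by (intro square_ideal_add square_ideal_bracket_left h_lift quot_HH)
  finally show ?thesis .
qed

lemma dEH_in_square_ideal: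
  assumes "a \<in> {1..n}" "b \<in> {1..n}" "k \<in> {1..n}"
  shows "dEH a b k \<in> I"
proof (rule vs.antisymmetric_in_subspace[OF square_ideal_subspace, of "\<lambda>a b. dEH a b k", OF dEH_swap dEH_same])
  fix a b assume ab: "a < b" "a \<in> {1..n}" "b \<in> {1..n}"
  have "dEH a b k = br (e a b - Eb a b) (Hb k) + (br (Eb a b) (Hb k) - eh_rhs Hb a b k)
      - (eh_rhs h a b k - eh_rhs Hb a b k)"
    using ab bracket_h_right[OF assms(3)] by (simp add: defect_EH_def ext_E_def bracket_diff_left)
  also have "\<dots> \<in> I"
    using ab assms(3)
    by (intro square_ideal_diff[OF square_ideal_add] square_ideal_bracket_left e_lift quot_EH
        eh_rhs_lift_in_square_ideal) (auto simp: e_pairs_def)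
  finally show "dEH a b k \<in> I" .
qed (use assms in auto)

lemma dHE_in_square_ideal:
  assumes "k \<in> {1..n}" "a \<in> {1..n}" "b \<in> {1..n}"
  shows "dHE k a b \<in> I"
proof (rule vs.antisymmetric_in_subspace[OF square_ideal_subspace, of "\<lambda>a b. dHE k a b", OF dHE_swap dHE_same])
  fix a b assume ab: "a < b" "a \<in> {1..n}" "b \<in> {1..n}"
  have "dHE k a b = br (h k - Hb k) (Eb a b) + (br (Hb k) (Eb a b) + eh_rhs Hb a b k)
      + (eh_rhs h a b k - eh_rhs Hb a b k)"
    using ab bracket_E_right[OF ab(2,3), of "h k"] by (simp add: defect_HE_def ext_E_def bracket_diff_left)
  also have "\<dots> \<in> I"
    using ab assms(1)
    by (intro square_ideal_add square_ideal_bracket_left h_lift quot_HE eh_rhs_lift_in_square_ideal)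
      auto
  finally show "dHE k a b \<in> I" .
qed (use assms in auto)

lemma dEE_in_square_ideal:
  assumes "a \<in> {1..n}" "b \<in> {1..n}" "c \<in> {1..n}" "d \<in> {1..n}"
  shows "dEE a b c d \<in> I"
proof (rule vs.antisymmetric_in_subspace[OF square_ideal_subspace, of "\<lambda>a b. dEE a b c d", OF dEE_swap_left dEE_same_left])
  fix a b assume ab: "a < b" "a \<in> {1..n}" "b \<in> {1..n}"
  show "dEE a b c d \<in> I"
  proof (rule vs.antisymmetric_in_subspace[OF square_ideal_subspace, of "\<lambda>c d. dEE a b c d", OF dEE_swap_right dEE_same_right])
    fix c d assume cd: "c < d" "c \<in> {1..n}" "d \<in> {1..n}"
    have "dEE a b c d = br (e a b - Eb a b) (Eb c d) + (br (Eb a b) (Eb c d) - ee_rhs (ext_E Eb) a b c d)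
        - (ee_rhs E' a b c d - ee_rhs (ext_E Eb) a b c d)"
      using ab cd bracket_E_right[OF cd(2,3), of "e a b"] by (simp add: defect_EE_def ext_E_def bracket_diff_left)
    also have "\<dots> \<in> I"
      using ab cd
      by (intro square_ideal_diff[OF square_ideal_add] square_ideal_bracket_left e_lift quot_EE
          ee_rhs_lift_in_square_ideal) (auto simp: e_pairs_def)
    finally show "dEE a b c d \<in> I" .
  qed (use assms in auto)
qed (use assms in auto)

abbreviation lift_span :: "'a set" where
  "lift_span \<equiv> vs.span ((\<lambda>(i, j). e i j) ` e_pairs n \<union> h ` {1..n})"

lemma lift_span_inter_square_ideal:
  assumes "w \<in> lift_span" and "w \<in> I"
  shows "w = 0"
proof -
  obtain c d where w: "w = (\<Sum>p\<in>e_pairs n. scale (c p) ((\<lambda>(i, j). e i j) p)) + (\<Sum>k\<in>{1..n}. scale (d k) (h k))"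
    using assms(1) unfolding vs.span_Un vs.span_image_finite[OF finite_e_pairs]
      vs.span_image_finite[OF finite_atLeastAtMost] by blast
  let ?u = "(\<Sum>(i, j)\<in>e_pairs n. scale (curry c i j) (Eb i j)) + (\<Sum>k\<in>{1..n}. scale (d k) (Hb k))"
  have "w - ?u = (\<Sum>p\<in>e_pairs n. scale (c p) ((\<lambda>(i, j). e i j - Eb i j) p)) + (\<Sum>k\<in>{1..n}. scale (d k) (h k - Hb k))"
    unfolding w by (simp add: split_def vs.scale_right_diff_distrib sum_subtractf algebra_simps)
  also have "\<dots> \<in> I"
    using e_lift h_lift
    by (intro square_ideal_add vs.subspace_sum[OF square_ideal_subspace]
        vs.subspace_scale[OF square_ideal_subspace]) auto
  finally have "w - ?u \<in> I" .
  then have "w - (w - ?u) \<in> I" by (rule square_ideal_diff[OF assms(2)])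
  then have "?u \<in> I" by (simp only: diff_diff_eq2 add_diff_cancel_left')
  from quot_indep[OF this] have "\<forall>p\<in>e_pairs n. c p = 0" "\<forall>k\<in>{1..n}. d k = 0"
    by auto
  then show ?thesis unfolding w by simp
qed

lemma E'_in_lift_span:
  assumes "a \<in> {1..n}" "b \<in> {1..n}"
  shows "E' a b \<in> lift_span"
proof (cases a b rule: linorder_cases)
  case less
  then have "e a b \<in> lift_span" using assms by (intro vs.span_base) (force simp: e_pairs_def)
  then show ?thesis using less by (simp add: ext_E_def)
next
  case greater
  then have "e b a \<in> lift_span" using assms by (intro vs.span_base) (force simp: e_pairs_def)
  then show ?thesis using greater by (simp add: ext_E_def vs.span_neg)
qed (simp add: vs.span_zero)

lemma h_in_lift_span: "k \<in> {1..n} \<Longrightarrow> h k \<in> lift_span"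
  by (intro vs.span_base) auto

lemma eh_rhs_h_in_lift_span: "a \<in> {1..n} \<Longrightarrow> b \<in> {1..n} \<Longrightarrow> eh_rhs h a b k \<in> lift_span"
  by (rule vs.eh_rhs_in_subspace[OF vs.subspace_span h_in_lift_span])

lemma ee_rhs_E'_in_lift_span:
  "a \<in> {1..n} \<Longrightarrow> b \<in> {1..n} \<Longrightarrow> c \<in> {1..n} \<Longrightarrow> d \<in> {1..n} \<Longrightarrow> ee_rhs E' a b c d \<in> lift_span"
  by (rule vs.ee_rhs_in_subspace[OF vs.subspace_span E'_in_lift_span])

lemma bracket_right_dEH_cancel:
  "a \<in> {1..n} \<Longrightarrow> b \<in> {1..n} \<Longrightarrow> k \<in> {1..n} \<Longrightarrow> br x (br (E' a b) (h k)) = br x (eh_rhs h a b k)"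
  by (rule bracket_cong_right) (use dEH_in_square_ideal[of a b k] in \<open>simp add: defect_EH_def\<close>)

lemma bracket_right_dHE_cancel:
  assumes "a \<in> {1..n}" "b \<in> {1..n}" "k \<in> {1..n}"
  shows "br x (br (h k) (E' a b)) = - eh_rhs (\<lambda>p. br x (h p)) a b k"
proof -
  have "br x (br (h k) (E' a b)) = br x (- eh_rhs h a b k)"
    by (rule bracket_cong_right) (use dHE_in_square_ideal[OF assms(3,1,2)] in \<open>simp add: defect_HE_def\<close>)
  then show ?thesis by (simp add: bracket_minus_right bracket_eh_rhs_right)
qed

lemma bracket_right_dHH: "k \<in> {1..n} \<Longrightarrow> l \<in> {1..n} \<Longrightarrow> br x (dHH k l) = 0"
  by (rule bracket_square_ideal_right) (rule dHH_in_square_ideal)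

lemma bracket_right_dEE_cancel:
  "a \<in> {1..n} \<Longrightarrow> b \<in> {1..n} \<Longrightarrow> c \<in> {1..n} \<Longrightarrow> d \<in> {1..n} \<Longrightarrow>
   br x (br (E' a b) (E' c d)) = br x (ee_rhs E' a b c d)"
  by (rule bracket_cong_right) (use dEE_in_square_ideal[of a b c d] in \<open>simp add: defect_EE_def\<close>)

abbreviation hh :: "'a \<Rightarrow> nat \<Rightarrow> nat \<Rightarrow> 'a" where
  "hh x k m \<equiv> br (br x (h k)) (h m)"

lemma hh_sym: "k \<in> {1..n} \<Longrightarrow> m \<in> {1..n} \<Longrightarrow> hh x k m = hh x m k"
  using leibniz[of x "h k" "h m"] bracket_right_dHH by simp

text \<open>Expand the bracket of x with h k, E' c d and h m in two ways.\<close>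
lemma hh_bracket_E:
  assumes central: "\<And>k m y. k \<in> {1..n} \<Longrightarrow> m \<in> {1..n} \<Longrightarrow> br (hh x k m) y = 0"
    and idx: "c \<in> {1..n}" "d \<in> {1..n}" "k \<in> {1..n}" "m \<in> {1..n}"
  shows "eh_rhs (\<lambda>p. hh x k p) c d m = hh (br x (E' c d)) k m - eh_rhs (\<lambda>p. hh x p m) c d k"
proof -
  let ?x = "br x (h k)"
  have "br (br ?x (E' c d)) (h m) = br (hh x k m) (E' c d) + br ?x (br (E' c d) (h m))"
    by (rule leibniz)
  also have "\<dots> = eh_rhs (\<lambda>p. hh x k p) c d m"
    using central[OF idx(3,4)] bracket_right_dEH_cancel[OF idx(1,2,4)] by (simp add: bracket_eh_rhs_right)
  finally have 1: "br (br ?x (E' c d)) (h m) = eh_rhs (\<lambda>p. hh x k p) c d m" .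
  have "br ?x (E' c d) = br (br x (E' c d)) (h k) + br x (br (h k) (E' c d))"
    by (rule leibniz)
  also have "\<dots> = br (br x (E' c d)) (h k) - eh_rhs (\<lambda>p. br x (h p)) c d k"
    using bracket_right_dHE_cancel[OF idx(1,2,3)] by simp
  finally have "br (br ?x (E' c d)) (h m) = hh (br x (E' c d)) k m - eh_rhs (\<lambda>p. hh x p m) c d k"
    by (simp add: bracket_diff_left bracket_eh_rhs_left)
  with 1 show ?thesis by simp
qed

text \<open>The two Leibniz identities below compare two expansions of a triple bracket of lifts. The
  difference of the expansions is a combination of defects, hence in I, and also a combination of
  lifts, hence in their span; so it vanishes.\<close>
lemma dHE_relation:
  assumes central: "\<And>k a b y. k \<in> {1..n} \<Longrightarrow> a \<in> {1..n} \<Longrightarrow> b \<in> {1..n} \<Longrightarrow> br (dHE k a b) y = 0"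
    and idx: "k \<in> {1..n}" "p \<in> {1..n}" "q \<in> {1..n}" "r \<in> {1..n}" "s \<in> {1..n}"
  shows "eh_rhs (\<lambda>a. dHE a p q) r s k = eh_rhs (\<lambda>a. dHE a r s) p q k + ee_rhs (\<lambda>a b. dHE k a b) p q r s"
proof -
  let ?V1 = "eh_rhs (\<lambda>a. dHE a r s) p q k" and ?P1 = "eh_rhs (\<lambda>a. eh_rhs h r s a) p q k"
  let ?V2 = "eh_rhs (\<lambda>a. dHE a p q) r s k" and ?P2 = "eh_rhs (\<lambda>a. eh_rhs h p q a) r s k"
  let ?V3 = "ee_rhs (\<lambda>a b. dHE k a b) p q r s" and ?P3 = "ee_rhs (\<lambda>a b. eh_rhs h a b k) p q r s"
  have L: "br (br (h k) (E' p q)) (E' r s) = - ?V1 + ?P1"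
    using central[OF idx(1,2,3)] by (simp add: bracket_h_E bracket_diff_left bracket_eh_rhs_left eh_rhs_diff)
  have R1: "br (br (h k) (E' r s)) (E' p q) = - ?V2 + ?P2"
    using central[OF idx(1,4,5)] by (simp add: bracket_h_E bracket_diff_left bracket_eh_rhs_left eh_rhs_diff)
  have R2: "br (h k) (br (E' p q) (E' r s)) = ?V3 - ?P3"
    using bracket_right_dEE_cancel[OF idx(2-5)] by (simp add: bracket_ee_rhs_right bracket_h_E ee_rhs_diff)
  have "?P1 - ?P2 + ?P3 = ?V1 - ?V2 + ?V3"
    using leibniz[of "h k" "E' p q" "E' r s"] L R1 R2 by (simp add: algebra_simps)
  moreover have "?P1 - ?P2 + ?P3 \<in> lift_span"
    using idx by (intro vs.span_add vs.span_diff vs.eh_rhs_in_subspace[OF vs.subspace_span, where A="{1..n}"]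
        vs.ee_rhs_in_subspace[OF vs.subspace_span, where A="{1..n}"] eh_rhs_h_in_lift_span)
  moreover have "?V1 - ?V2 + ?V3 \<in> I"
    using idx dHE_in_square_ideal
    by (intro square_ideal_add square_ideal_diff vs.eh_rhs_in_subspace[OF square_ideal_subspace, where A="{1..n}"]
        vs.ee_rhs_in_subspace[OF square_ideal_subspace, where A="{1..n}"]) auto
  ultimately have "?V1 - ?V2 + ?V3 = 0" using lift_span_inter_square_ideal by metis
  then show ?thesis by (simp add: algebra_simps)
qed

lemma dEE_relation:
  assumes central: "\<And>a b c d y. a \<in> {1..n} \<Longrightarrow> b \<in> {1..n} \<Longrightarrow> c \<in> {1..n} \<Longrightarrow> d \<in> {1..n} \<Longrightarrow>
      br (dEE a b c d) y = 0"
    and idx: "p \<in> {1..n}" "q \<in> {1..n}" "r \<in> {1..n}" "s \<in> {1..n}" "u \<in> {1..n}" "v \<in> {1..n}"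
  shows "ee_rhs (\<lambda>a b. dEE a b u v) p q r s
    = ee_rhs (\<lambda>a b. dEE a b r s) p q u v + ee_rhs (\<lambda>a b. dEE p q a b) r s u v"
proof -
  let ?V1 = "ee_rhs (\<lambda>a b. dEE a b u v) p q r s" and ?P1 = "ee_rhs (\<lambda>a b. ee_rhs E' a b u v) p q r s"
  let ?V2 = "ee_rhs (\<lambda>a b. dEE a b r s) p q u v" and ?P2 = "ee_rhs (\<lambda>a b. ee_rhs E' a b r s) p q u v"
  let ?V3 = "ee_rhs (\<lambda>a b. dEE p q a b) r s u v" and ?P3 = "ee_rhs (\<lambda>a b. ee_rhs E' p q a b) r s u v"
  have L: "br (br (E' p q) (E' r s)) (E' u v) = ?V1 + ?P1"
    using central[OF idx(1-4)] by (simp add: bracket_E_E bracket_add_left bracket_ee_rhs_left ee_rhs_add)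
  have R1: "br (br (E' p q) (E' u v)) (E' r s) = ?V2 + ?P2"
    using central[OF idx(1,2,5,6)] by (simp add: bracket_E_E bracket_add_left bracket_ee_rhs_left ee_rhs_add)
  have R2: "br (E' p q) (br (E' r s) (E' u v)) = ?V3 + ?P3"
    using bracket_right_dEE_cancel[OF idx(3-6)] by (simp add: bracket_ee_rhs_right bracket_E_E ee_rhs_add)
  have "?P1 - ?P2 - ?P3 = ?V2 + ?V3 - ?V1"
    using leibniz[of "E' p q" "E' r s" "E' u v"] L R1 R2 by (simp add: algebra_simps)
  moreover have "?P1 - ?P2 - ?P3 \<in> lift_span"
    using idx by (intro vs.span_diff vs.ee_rhs_in_subspace[OF vs.subspace_span, where A="{1..n}"] ee_rhs_E'_in_lift_span)
  moreover have "?V2 + ?V3 - ?V1 \<in> I"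
    using idx dEE_in_square_ideal
    by (intro square_ideal_add square_ideal_diff vs.ee_rhs_in_subspace[OF square_ideal_subspace, where A="{1..n}"]) auto
  ultimately have "?V2 + ?V3 - ?V1 = 0" using lift_span_inter_square_ideal by metis
  then show ?thesis by (simp add: algebra_simps)
qed

lemma bracket_I_h_invariant: "v \<in> I \<Longrightarrow> k \<in> {1..n} \<Longrightarrow> br v (h k) \<in> invariants"
  using bracket_Hb_invariant bracket_h_right by simp

lemma bracket_I_h_central: "v \<in> I \<Longrightarrow> k \<in> {1..n} \<Longrightarrow> br (br v (h k)) y = 0"
  using bracket_I_h_invariant bracket_invariants_left by blast

abbreviation hhh :: "nat \<Rightarrow> nat \<Rightarrow> nat \<Rightarrow> 'a" where
  "hhh q k m \<equiv> hh (h q) k m"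

lemma hhh_relation:
  assumes idx: "q \<in> {1..n}" "c \<in> {1..n}" "d \<in> {1..n}" "k \<in> {1..n}" "m \<in> {1..n}"
  shows "eh_rhs (\<lambda>p. hhh q k p) c d m = - eh_rhs (\<lambda>p. hhh p k m) c d q - eh_rhs (\<lambda>p. hhh q p m) c d k"
proof -
  have central: "br (hhh q k' m') y = 0" if "k' \<in> {1..n}" "m' \<in> {1..n}" for k' m' y
    using bracket_I_h_central[OF dHH_in_square_ideal[OF idx(1) that(1)] that(2)] .
  have "hh (br (h q) (E' c d)) k m = hh (dHE q c d) k m - eh_rhs (\<lambda>p. hhh p k m) c d q"
    by (simp add: bracket_h_E bracket_diff_left bracket_eh_rhs_left)
  also have "hh (dHE q c d) k m = 0"
    using bracket_I_h_central[OF dHE_in_square_ideal[OF idx(1,2,3)] idx(4)] by simp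
  finally show ?thesis using hh_bracket_E[of "h q", OF central idx(2-5)] by simp
qed

lemma hhh_distinct:
  assumes idx: "q \<in> {1..n}" "c \<in> {1..n}" "d \<in> {1..n}" and ne: "q \<noteq> c" "q \<noteq> d" "c \<noteq> d"
  shows "hhh q c d = 0"
proof -
  have "- hhh q c d = hhh q d c"
    using hhh_relation[OF idx(1,2,3,2,2)] ne by (simp add: eh_rhs_def)
  then have "hhh q c d + hhh q c d = 0" using hh_sym[OF idx(2,3)] by (simp add: add_eq_0_iff)
  then show ?thesis by (rule double_eq_zero)
qed

lemma hhh_right_diag:
  assumes idx: "q \<in> {1..n}" "k \<in> {1..n}" and ne: "q \<noteq> k"
  shows "hhh q k k = 0"
  using hhh_relation[OF third(1) third(1) idx(1) idx(2) idx(2), of q k q k] ne third(2,3)[of q k]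
  by (simp add: eh_rhs_def)

lemma hhh_left_diag:
  assumes idx: "q \<in> {1..n}" "m \<in> {1..n}" and ne: "q \<noteq> m"
  shows "hhh q q m = 0"
proof -
  have "- hhh q q m = hhh m q q + hhh q m q"
    using hhh_relation[OF idx(1) idx(1) idx(2) idx(1) idx(1)] ne by (simp add: eh_rhs_def)
  then have "- hhh q q m = hhh q q m" using hhh_right_diag[OF idx(2,1)] ne hh_sym[OF idx(2,1)] by simp
  then have "hhh q q m + hhh q q m = 0" by (simp add: add_eq_0_iff)
  then show ?thesis by (rule double_eq_zero)
qed

lemma hhh_diag:
  assumes idx: "q \<in> {1..n}"
  shows "hhh q q q = 0"
proof -
  let ?d = "third q q"
  have d: "?d \<in> {1..n}" "?d \<noteq> q" using third by auto
  have "hhh q q q = hhh ?d q ?d + hhh q ?d ?d"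
    using hhh_relation[OF idx(1) idx(1) d(1) idx(1) d(1)] d by (simp add: eh_rhs_def)
  moreover have "hhh ?d q ?d = 0" using hh_sym[OF idx d(1)] hhh_left_diag[OF d(1) idx] d by simp
  moreover have "hhh q ?d ?d = 0" using hhh_right_diag[OF idx d(1)] d by simp
  ultimately show ?thesis by simp
qed

lemma hhh_zero:
  assumes idx: "q \<in> {1..n}" "k \<in> {1..n}" "m \<in> {1..n}"
  shows "hhh q k m = 0"
proof -
  consider "q = k" "k = m" | "q = k" "k \<noteq> m" | "q \<noteq> k" "q = m" | "q \<noteq> k" "k = m"
    | "q \<noteq> k" "q \<noteq> m" "k \<noteq> m"
    by blast
  then show ?thesis
  proof cases
    case 1 then show ?thesis using hhh_diag[OF idx(1)] by simp
  next
    case 2 then show ?thesis using hhh_left_diag[OF idx(1,3)] by simp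
  next
    case 3 then show ?thesis using hhh_left_diag[OF idx(1,2)] hh_sym[OF idx(2,3)] by simp
  next
    case 4 then show ?thesis using hhh_right_diag[OF idx(1,2)] by simp
  next
    case 5 then show ?thesis using hhh_distinct[OF idx] by simp
  qed
qed

lemma dHH_invariant: "k \<in> {1..n} \<Longrightarrow> l \<in> {1..n} \<Longrightarrow> dHH k l \<in> invariants"
  using dHH_in_square_ideal hhh_zero bracket_h_right by (intro invariantsI) auto

context
  assumes HH: "HH_exact h"
begin

lemma dHH_zero: "k \<in> {1..n} \<Longrightarrow> l \<in> {1..n} \<Longrightarrow> dHH k l = 0"
  using HH unfolding HH_exact_def by blast

lemma dHE_invariant:
  assumes idx: "k \<in> {1..n}" "a \<in> {1..n}" "b \<in> {1..n}"
  shows "dHE k a b \<in> invariants"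
proof (rule invariantsI)
  show "dHE k a b \<in> I" using dHE_in_square_ideal idx by simp
  fix m assume m: "m \<in> {1..n}"
  have "br (br (h k) (E' a b)) (h m) = br (dHH k m) (E' a b) + br (h k) (br (E' a b) (h m))"
    by (rule leibniz)
  also have "\<dots> = eh_rhs (\<lambda>p. dHH k p) a b m"
    using dHH_zero[OF idx(1) m] bracket_right_dEH_cancel[OF idx(2,3) m] by (simp add: bracket_eh_rhs_right)
  also have "\<dots> = 0" using dHH_zero idx by (simp add: eh_rhs_def)
  finally have "br (br (h k) (E' a b)) (h m) = 0" .
  moreover have "br (eh_rhs h a b k) (h m) = 0"
    using dHH_zero idx m by (simp add: bracket_eh_rhs_left eh_rhs_def bracket_minus_left)
  ultimately show "br (dHE k a b) (Hb m) = 0"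
    using bracket_h_right[OF m] by (simp add: defect_HE_def bracket_add_left)
qed

lemma bracket_dHE_left: "k \<in> {1..n} \<Longrightarrow> a \<in> {1..n} \<Longrightarrow> b \<in> {1..n} \<Longrightarrow> br (dHE k a b) y = 0"
  using dHE_invariant bracket_invariants_left by blast

lemma dHE_diag_indep:
  assumes idx: "a \<in> {1..n}" "b \<in> {1..n}" "c \<in> {1..n}" and ne: "a \<noteq> b" "a \<noteq> c" "b \<noteq> c"
  shows "dHE c c b = dHE a a b"
  using dHE_relation[OF bracket_dHE_left, of a a c c b] idx ne by (simp add: eh_rhs_def ee_rhs_def)

lemma dHE_distinct:
  assumes idx: "a \<in> {1..n}" "b \<in> {1..n}" "c \<in> {1..n}" and ne: "a \<noteq> b" "a \<noteq> c" "b \<noteq> c"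
  shows "dHE c a b = 0"
proof -
  have cyc: "dHE x y z = dHE y z x + dHE z x y"
    if "x \<in> {1..n}" "y \<in> {1..n}" "z \<in> {1..n}" "x \<noteq> y" "x \<noteq> z" "y \<noteq> z" for x y z
  proof -
    have "- dHE z y x = dHE y x z + dHE x y z"
      using dHE_relation[OF bracket_dHE_left, of x y x x z] that by (simp add: eh_rhs_def ee_rhs_def)
    then show ?thesis using dHE_swap[of z y x] dHE_swap[of y x z] by (simp add: algebra_simps)
  qed
  have "dHE c a b + dHE c a b = 0"
    using cyc[of a b c] cyc[of b c a] idx ne by (simp add: algebra_simps)
  then show ?thesis by (rule double_eq_zero)
qed

text \<open>By dHE_diag_indep, any index other than b could replace third b b here.\<close>
definition HE_correction :: "nat \<Rightarrow> 'a" where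
  "HE_correction b = dHE (third b b) (third b b) b"

lemma HE_correction_invariant: "b \<in> {1..n} \<Longrightarrow> HE_correction b \<in> invariants"
  unfolding HE_correction_def by (rule dHE_invariant[OF third(1) third(1)])

lemma dHE_shape:
  assumes idx: "k \<in> {1..n}" "a \<in> {1..n}" "b \<in> {1..n}"
  shows "dHE k a b = - eh_rhs HE_correction a b k"
proof -
  have diag: "dHE a a b = HE_correction b" if "a \<in> {1..n}" "b \<in> {1..n}" "a \<noteq> b" for a b
    using that third[of b b] dHE_diag_indep[of a b "third b b"]
    by (cases "third b b = a") (auto simp: HE_correction_def)
  show ?thesis
  proof (cases "a = b")
    case False
    consider "k = a" | "k = b" | "k \<noteq> a" "k \<noteq> b" by blast
    then show ?thesis
    proof cases
      case 1 then show ?thesis using diag[OF idx(2,3)] False by (simp add: eh_rhs_def)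
    next
      case 2 then show ?thesis using diag[OF idx(3,2)] False dHE_swap[of b a b] by (simp add: eh_rhs_def)
    next
      case 3 then show ?thesis using dHE_distinct[OF idx(2,3,1)] False by (simp add: eh_rhs_def)
    qed
  qed simp
qed

abbreviation hEh :: "nat \<Rightarrow> nat \<Rightarrow> nat \<Rightarrow> nat \<Rightarrow> 'a" where
  "hEh a b k m \<equiv> hh (E' a b) k m"

lemma hEh_eq: "a \<in> {1..n} \<Longrightarrow> b \<in> {1..n} \<Longrightarrow> m \<in> {1..n} \<Longrightarrow> hEh a b k m = br (dEH a b k) (h m)"
  using dHH_zero by (simp add: bracket_E_h bracket_add_left bracket_eh_rhs_left eh_rhs_def bracket_minus_left)

lemma bracket_hEh_left:
  "a \<in> {1..n} \<Longrightarrow> b \<in> {1..n} \<Longrightarrow> k \<in> {1..n} \<Longrightarrow> m \<in> {1..n} \<Longrightarrow> br (hEh a b k m) y = 0"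
  using hEh_eq bracket_I_h_central dEH_in_square_ideal by simp

lemma hEh_relation:
  assumes idx: "a \<in> {1..n}" "b \<in> {1..n}" "c \<in> {1..n}" "d \<in> {1..n}" "k \<in> {1..n}" "m \<in> {1..n}"
  shows "eh_rhs (\<lambda>p. hEh a b k p) c d m = ee_rhs (\<lambda>x y. hEh x y k m) a b c d - eh_rhs (\<lambda>p. hEh a b p m) c d k"
proof -
  have "hh (br (E' a b) (E' c d)) k m = hh (dEE a b c d) k m + ee_rhs (\<lambda>x y. hEh x y k m) a b c d"
    by (simp add: bracket_E_E bracket_add_left bracket_ee_rhs_left)
  also have "hh (dEE a b c d) k m = 0"
    using bracket_I_h_central[OF dEE_in_square_ideal[OF idx(1-4)] idx(5)] by simp
  finally show ?thesis using hh_bracket_E[of "E' a b", OF bracket_hEh_left[OF idx(1,2)] idx(3-6)] by simp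
qed

lemma hEh_pair_zero:
  assumes idx: "a \<in> {1..n}" "b \<in> {1..n}" and ne: "a \<noteq> b"
  shows "hEh a b a b = 0"
proof -
  have "hEh a b b a = - hEh a b a b"
    using hEh_relation[OF idx idx idx(2) idx(2)] ne by (simp add: eh_rhs_def ee_rhs_def)
  then have "hEh a b a b + hEh a b a b = 0" using hh_sym[OF idx] by (simp add: add_eq_0_iff)
  then show ?thesis by (rule double_eq_zero)
qed

lemma hEh_diag_swap:
  assumes idx: "a \<in> {1..n}" "b \<in> {1..n}" and ne: "a \<noteq> b"
  shows "hEh a b b b = hEh a b a a"
  using hEh_relation[OF idx idx idx(2) idx(1)] ne by (simp add: eh_rhs_def ee_rhs_def)

lemma hEh_first_mixed_zero:
  assumes idx: "a \<in> {1..n}" "b \<in> {1..n}" "m \<in> {1..n}" and ne: "a \<noteq> b" "m \<noteq> a" "m \<noteq> b"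
  shows "hEh a b a m = 0"
  using hEh_relation[OF idx(1,2) idx(1,2) idx(2) idx(3)] ne by (simp add: eh_rhs_def ee_rhs_def)

lemma hEh_second_mixed_zero:
  assumes idx: "a \<in> {1..n}" "b \<in> {1..n}" "m \<in> {1..n}" and ne: "a \<noteq> b" "m \<noteq> a" "m \<noteq> b"
  shows "hEh a b b m = 0"
  using hEh_relation[OF idx(1,2) idx(1,2) idx(1) idx(3)] ne by (simp add: eh_rhs_def ee_rhs_def)

lemma hEh_second_diag_zero:
  assumes idx: "a \<in> {1..n}" "b \<in> {1..n}" "d \<in> {1..n}" and ne: "a \<noteq> b" "a \<noteq> d" "b \<noteq> d"
  shows "hEh a d d d = 0"
proof -
  have "hEh a b d b = hEh a d d d - hEh a b b d"
    using hEh_relation[OF idx(1,2) idx(2,3) idx(3) idx(3)] ne by (simp add: eh_rhs_def ee_rhs_def)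
  moreover have "hEh a b b d = 0" using hEh_second_mixed_zero[OF idx(1,2,3)] ne by simp
  moreover have "hEh a b d b = 0" using hh_sym[OF idx(3,2)] hEh_second_mixed_zero[OF idx(1,2,3)] ne by simp
  ultimately show ?thesis by simp
qed

lemma hEh_outer_diag_zero:
  assumes idx: "a \<in> {1..n}" "b \<in> {1..n}" "d \<in> {1..n}" and ne: "a \<noteq> b" "a \<noteq> d" "b \<noteq> d"
  shows "hEh a d b b = 0"
proof -
  have "- hEh a b b d = hEh a d b b + hEh a b d b"
    using hEh_relation[OF idx(1,2) idx(2,3) idx(2) idx(2)] ne by (simp add: eh_rhs_def ee_rhs_def)
  moreover have "hEh a b b d = 0" using hEh_second_mixed_zero[OF idx(1,2,3)] ne by simp
  moreover have "hEh a b d b = 0" using hh_sym[OF idx(3,2)] hEh_second_mixed_zero[OF idx(1,2,3)] ne by simp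
  ultimately show ?thesis by simp
qed

lemma hEh_outer_swap:
  assumes idx: "a \<in> {1..n}" "b \<in> {1..n}" "d \<in> {1..n}" "m \<in> {1..n}"
    and ne: "a \<noteq> b" "a \<noteq> d" "b \<noteq> d" "m \<noteq> a" "m \<noteq> b" "m \<noteq> d"
  shows "hEh a d b m = - hEh a b d m"
proof -
  have "0 = hEh a d b m + hEh a b d m"
    using hEh_relation[OF idx(1,2) idx(2,3) idx(2) idx(4)] ne by (simp add: eh_rhs_def ee_rhs_def)
  then show ?thesis by (simp add: eq_neg_iff_add_eq_0)
qed

lemma hEh_diag_zero:
  assumes idx: "p \<in> {1..n}" "q \<in> {1..n}" "k \<in> {1..n}" and pq: "p \<noteq> q"
  shows "hEh p q k k = 0"
proof -
  let ?b = "third p q"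
  have b: "?b \<in> {1..n}" "?b \<noteq> p" "?b \<noteq> q" using third by auto
  have "hEh p q q q = 0" using hEh_second_diag_zero[OF idx(1) b(1) idx(2)] b pq by simp
  moreover have "hEh p q p p = 0" using calculation hEh_diag_swap[OF idx(1,2) pq] by simp
  moreover have "hEh p q k k = 0" if "k \<noteq> p" "k \<noteq> q"
    using hEh_outer_diag_zero[OF idx(1,3,2)] pq that by simp
  ultimately show ?thesis by blast
qed

lemma hEh_zero:
  assumes idx: "p \<in> {1..n}" "q \<in> {1..n}" "k \<in> {1..n}" "m \<in> {1..n}"
  shows "hEh p q k m = 0"
proof (cases "p = q \<or> k = m")
  case True
  then show ?thesis using hEh_diag_zero[OF idx(1,2,3)] by (cases "p = q") auto
next
  case False
  then have pq: "p \<noteq> q" and km: "k \<noteq> m" by auto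
  consider "k = p" "m = q" | "k = q" "m = p" | "k = p" "m \<noteq> q" | "k = q" "m \<noteq> p"
    | "m = p" "k \<noteq> q" | "m = q" "k \<noteq> p" | "k \<noteq> p" "k \<noteq> q" "m \<noteq> p" "m \<noteq> q" by blast
  then show ?thesis
  proof cases
    case 1 then show ?thesis using hEh_pair_zero[OF idx(1,2) pq] by simp
  next
    case 2 then show ?thesis using hEh_pair_zero[OF idx(1,2) pq] hh_sym[OF idx(2,1)] by simp
  next
    case 3 then show ?thesis using hEh_first_mixed_zero[OF idx(1,2,4)] pq km by simp
  next
    case 4 then show ?thesis using hEh_second_mixed_zero[OF idx(1,2,4)] pq km by simp
  next
    case 5 then show ?thesis using hEh_first_mixed_zero[OF idx(1,2,3)] hh_sym[OF idx(3,4)] pq km by simp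
  next
    case 6 then show ?thesis using hEh_second_mixed_zero[OF idx(1,2,3)] hh_sym[OF idx(3,4)] pq km by simp
  next
    case 7
    have "hEh p q k m = - hEh p k q m" using hEh_outer_swap[OF idx(1,3,2,4)] 7 pq km by simp
    also have "hEh p k q m = - hEh p m k q"
      using hEh_outer_swap[OF idx(1,4,3,2)] hh_sym[OF idx(2,4), of "E' p k"] 7 pq km by simp
    also have "hEh p m k q = - hEh p q k m"
      using hEh_outer_swap[OF idx(1,2,4,3)] hh_sym[OF idx(2,3), of "E' p m"] hh_sym[OF idx(3,4), of "E' p q"]
        7 pq km by simp
    finally have "hEh p q k m + hEh p q k m = 0" by (simp add: eq_neg_iff_add_eq_0)
    then show ?thesis by (rule double_eq_zero)
  qed
qed

lemma dEH_invariant: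
  assumes idx: "a \<in> {1..n}" "b \<in> {1..n}" "k \<in> {1..n}"
  shows "dEH a b k \<in> invariants"
  using dEH_in_square_ideal[OF idx] hEh_zero[OF idx] hEh_eq[OF idx(1,2)] bracket_h_right
  by (intro invariantsI) auto

end

context
  assumes HH: "HH_exact h" and HE: "HE_exact e h" and EH: "EH_exact e h"
begin

lemma bracket_E_h_exact: "a \<in> {1..n} \<Longrightarrow> b \<in> {1..n} \<Longrightarrow> k \<in> {1..n} \<Longrightarrow> br (E' a b) (h k) = eh_rhs h a b k"
  using EH unfolding EH_exact_def by (simp add: defect_EH_def)

lemma bracket_h_E_exact: "a \<in> {1..n} \<Longrightarrow> b \<in> {1..n} \<Longrightarrow> k \<in> {1..n} \<Longrightarrow> br (h k) (E' a b) = - eh_rhs h a b k"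
  using HE unfolding HE_exact_def by (simp add: defect_HE_def eq_neg_iff_add_eq_0)

lemma bracket_EE_h:
  assumes idx: "a \<in> {1..n}" "b \<in> {1..n}" "c \<in> {1..n}" "d \<in> {1..n}" "m \<in> {1..n}"
  shows "br (br (E' a b) (E' c d)) (h m) = eh_rhs (\<lambda>p. - eh_rhs h c d p) a b m + eh_rhs (\<lambda>p. eh_rhs h a b p) c d m"
proof -
  have "br (br (E' a b) (E' c d)) (h m) = br (br (E' a b) (h m)) (E' c d) + br (E' a b) (br (E' c d) (h m))"
    by (rule leibniz)
  also have "br (br (E' a b) (h m)) (E' c d) = eh_rhs (\<lambda>p. br (h p) (E' c d)) a b m"
    using bracket_E_h_exact[OF idx(1,2,5)] by (simp add: bracket_eh_rhs_left)
  also have "\<dots> = eh_rhs (\<lambda>p. - eh_rhs h c d p) a b m"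
    using bracket_h_E_exact[OF idx(3,4)] idx(1,2) by (intro eh_rhs_cong[of "{1..n}"]) auto
  also have "br (E' a b) (br (E' c d) (h m)) = eh_rhs (\<lambda>p. br (E' a b) (h p)) c d m"
    using bracket_E_h_exact[OF idx(3,4,5)] by (simp add: bracket_eh_rhs_right)
  also have "\<dots> = eh_rhs (\<lambda>p. eh_rhs h a b p) c d m"
    using bracket_E_h_exact[OF idx(1,2)] idx(3,4) by (intro eh_rhs_cong[of "{1..n}"]) auto
  finally show ?thesis .
qed

lemma dEE_invariant:
  assumes idx: "a \<in> {1..n}" "b \<in> {1..n}" "c \<in> {1..n}" "d \<in> {1..n}"
  shows "dEE a b c d \<in> invariants"
proof (rule invariantsI)
  show "dEE a b c d \<in> I" using dEE_in_square_ideal idx by simp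
  fix m assume m: "m \<in> {1..n}"
  let ?P = "eh_rhs (\<lambda>p. - eh_rhs h c d p) a b m + eh_rhs (\<lambda>p. eh_rhs h a b p) c d m
    - ee_rhs (\<lambda>x y. eh_rhs h x y m) a b c d"
  have "br (ee_rhs E' a b c d) (h m) = ee_rhs (\<lambda>x y. eh_rhs h x y m) a b c d"
    using bracket_E_h_exact m idx by (simp add: bracket_ee_rhs_left) (intro ee_rhs_cong[of "{1..n}"], auto)
  then have "br (dEE a b c d) (h m) = ?P"
    using bracket_EE_h[OF idx m] by (simp add: defect_EE_def bracket_diff_left)
  moreover have "?P \<in> lift_span"
    using idx m
    by (intro vs.span_diff vs.span_add vs.eh_rhs_in_subspace[OF vs.subspace_span, where A="{1..n}"]
        vs.ee_rhs_in_subspace[OF vs.subspace_span, where A="{1..n}"] vs.span_neg eh_rhs_h_in_lift_span)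
  moreover have "br (dEE a b c d) (h m) \<in> I"
    using bracket_I_h_invariant[OF dEE_in_square_ideal[OF idx] m] invariants_subset_square_ideal by blast
  ultimately have "br (dEE a b c d) (h m) = 0" using lift_span_inter_square_ideal by metis
  then show "br (dEE a b c d) (Hb m) = 0" using bracket_h_right[OF m] by simp
qed

lemma bracket_dEE_left:
  "a \<in> {1..n} \<Longrightarrow> b \<in> {1..n} \<Longrightarrow> c \<in> {1..n} \<Longrightarrow> d \<in> {1..n} \<Longrightarrow> br (dEE a b c d) y = 0"
  using dEE_invariant bracket_invariants_left by blast

lemmas dEE_cyclic = dEE_relation[OF bracket_dEE_left]

lemma dEE_rotate:
  assumes idx: "x \<in> {1..n}" "y \<in> {1..n}" "z \<in> {1..n}" and ne: "x \<noteq> y" "x \<noteq> z" "y \<noteq> z"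
  shows "dEE x z x y = - dEE x y x z"
proof -
  have "dEE x z x y = dEE x y z x"
    using dEE_cyclic[of x y y z x y] idx ne by (simp add: ee_rhs_def)
  then show ?thesis using dEE_swap_right[of x y z x] by simp
qed

lemma dEE_middle_indep:
  assumes idx: "a \<in> {1..n}" "b \<in> {1..n}" "c \<in> {1..n}" "d \<in> {1..n}"
    and ne: "a \<noteq> b" "a \<noteq> c" "a \<noteq> d" "b \<noteq> c" "b \<noteq> d" "c \<noteq> d"
  shows "dEE a c c d = dEE a b b d"
  using dEE_cyclic[of a b b c c d] idx ne by (simp add: ee_rhs_def)

lemma dEE_triangle:
  assumes idx: "a \<in> {1..n}" "b \<in> {1..n}" "c \<in> {1..n}" and ne: "a \<noteq> b" "a \<noteq> c" "b \<noteq> c"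
  shows "dEE b c b c + dEE a c a c = dEE a b a b"
proof -
  have "- dEE b c c b = - dEE a c a c + dEE a b a b"
    using dEE_cyclic[of a b a c c b] idx ne by (simp add: ee_rhs_def)
  then show ?thesis using dEE_swap_right[of b c b c] by (simp add: algebra_simps)
qed

lemma dEE_pair_zero:
  assumes idx: "a \<in> {1..n}" "b \<in> {1..n}" and ne: "a \<noteq> b"
  shows "dEE a b a b = 0"
proof -
  let ?c = "third a b"
  have c: "?c \<in> {1..n}" "?c \<noteq> a" "?c \<noteq> b" using third by auto
  have 1: "dEE a b a b + dEE ?c b ?c b = dEE ?c a ?c a" using dEE_triangle[OF c(1) idx] c ne by simp
  have 2: "dEE a b a b + dEE ?c a ?c a = dEE ?c b ?c b"
    using dEE_triangle[OF c(1) idx(2,1)] c ne dEE_swap_left[of a b b a] dEE_swap_right[of a b a b] by simp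
  have "(dEE a b a b + dEE a b a b) + dEE ?c b ?c b = dEE ?c b ?c b"
    by (simp only: add.assoc 1 2)
  then have "dEE a b a b + dEE a b a b = 0" by simp
  then show ?thesis by (rule double_eq_zero)
qed

lemma dEE_distinct:
  assumes idx: "a \<in> {1..n}" "b \<in> {1..n}" "c \<in> {1..n}" "d \<in> {1..n}"
    and ne: "a \<noteq> b" "a \<noteq> c" "a \<noteq> d" "b \<noteq> c" "b \<noteq> d" "c \<noteq> d"
  shows "dEE a b c d = 0"
proof -
  have rel: "dEE w x y z = dEE x y w z + dEE x z y w"
    if "w \<in> {1..n}" "x \<in> {1..n}" "y \<in> {1..n}" "z \<in> {1..n}"
      "w \<noteq> x" "w \<noteq> y" "w \<noteq> z" "x \<noteq> y" "x \<noteq> z" "y \<noteq> z" for w x y z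
  proof -
    have "dEE x y w z = - dEE x z y w + dEE w x y z"
      using dEE_cyclic[of w x y w w z] that by (simp add: ee_rhs_def)
    then show ?thesis by (simp add: algebra_simps)
  qed
  have 1: "- dEE a d b c = - dEE a b c d + dEE a c b d"
    using rel[of d a b c] idx ne dEE_swap_left[of d a b c] dEE_swap_right[of a b d c] by simp
  have 2: "- dEE a c b d = dEE a b c d + dEE a d b c"
    using rel[of c a b d] idx ne dEE_swap_left[of c a b d] by simp
  have "dEE a b c d + dEE a b c d = (dEE a b c d + dEE a d b c) + (dEE a b c d - dEE a d b c)"
    by (simp add: algebra_simps)
  also have "dEE a b c d - dEE a d b c = dEE a c b d" using 1 by (simp add: algebra_simps)
  also have "dEE a b c d + dEE a d b c = - dEE a c b d" using 2 by simp
  finally have "dEE a b c d + dEE a b c d = 0" by simp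
  then show ?thesis by (rule double_eq_zero)
qed

text \<open>By dEE_middle_indep, any index other than a and d could replace third a d here.\<close>
definition EE_correction :: "nat \<Rightarrow> nat \<Rightarrow> 'a" where
  "EE_correction a d = dEE a (third a d) (third a d) d"

lemma EE_correction_invariant: "a \<in> {1..n} \<Longrightarrow> b \<in> {1..n} \<Longrightarrow> EE_correction a b \<in> invariants"
  unfolding EE_correction_def by (rule dEE_invariant[OF _ third(1) third(1)])

lemma ext_EE_correction_invariant:
  "a \<in> {1..n} \<Longrightarrow> b \<in> {1..n} \<Longrightarrow> ext_E EE_correction a b \<in> invariants"
  using EE_correction_invariant vs.subspace_neg[OF invariants_subspace] vs.subspace_0[OF invariants_subspace]
  by (simp add: ext_E_def)

lemma dEE_middle_eq_correction:
  assumes idx: "a \<in> {1..n}" "b \<in> {1..n}" "d \<in> {1..n}" and ne: "a \<noteq> b" "a \<noteq> d" "b \<noteq> d"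
  shows "dEE a b b d = EE_correction a d"
  using third[of a d] dEE_middle_indep[OF idx(1,2) third(1) idx(3)] idx ne
  by (cases "third a d = b") (auto simp: EE_correction_def)

lemma ext_EE_correction:
  assumes idx: "x \<in> {1..n}" "y \<in> {1..n}" "b \<in> {1..n}" and ne: "x \<noteq> y" "b \<noteq> x" "b \<noteq> y"
  shows "ext_E EE_correction x y = dEE x b b y"
proof (cases "x < y")
  case True
  then show ?thesis using dEE_middle_eq_correction[OF idx(1,3,2)] ne by (simp add: ext_E_def)
next
  case False
  have "dEE x b b y = - dEE b x b y" by (rule dEE_swap_left)
  also have "dEE b x b y = - dEE b y b x" using dEE_rotate[OF idx(3,2,1)] ne by simp
  also have "dEE b y b x = - dEE y b b x" by (rule dEE_swap_left)
  finally show ?thesis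
    using False ne dEE_middle_eq_correction[OF idx(2,3,1)] by (simp add: ext_E_def)
qed

lemma dEE_shape:
  assumes idx: "p \<in> {1..n}" "q \<in> {1..n}" "r \<in> {1..n}" "s \<in> {1..n}"
  shows "dEE p q r s = ee_rhs (ext_E EE_correction) p q r s"
proof (cases "p = q \<or> r = s")
  case True then show ?thesis by (auto simp: ee_rhs_def)
next
  case False
  then have pq: "p \<noteq> q" and rs: "r \<noteq> s" by auto
  consider "p = r" "q = s" | "p = s" "q = r" | "q = r" "p \<noteq> s" | "q = s" "p \<noteq> r" | "p = r" "q \<noteq> s"
    | "p = s" "q \<noteq> r" | "p \<noteq> r" "p \<noteq> s" "q \<noteq> r" "q \<noteq> s" by blast
  then show ?thesis
  proof cases
    case 1 then show ?thesis using dEE_pair_zero[OF idx(1,2) pq] by (simp add: ee_rhs_def)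
  next
    case 2 then show ?thesis using dEE_pair_zero[OF idx(1,2) pq] dEE_swap_right[of p q q p] by (simp add: ee_rhs_def)
  next
    case 3 then show ?thesis using ext_EE_correction[OF idx(1,4,2)] pq rs by (simp add: ee_rhs_def)
  next
    case 4 then show ?thesis using ext_EE_correction[OF idx(1,3,2)] dEE_swap_right[of p q r q] pq rs by (simp add: ee_rhs_def)
  next
    case 5 then show ?thesis using ext_EE_correction[OF idx(2,4,1)] dEE_swap_left[of p q p s] pq rs by (simp add: ee_rhs_def)
  next
    case 6
    have "dEE p q r p = dEE q p p r" using dEE_swap_left[of p q r p] dEE_swap_right[of q p r p] by simp
    then show ?thesis using 6 ext_EE_correction[OF idx(2,3,1)] pq rs by (simp add: ee_rhs_def)
  next
    case 7 then show ?thesis using dEE_distinct[OF idx] pq rs by (simp add: ee_rhs_def)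
  qed
qed

end

context
  assumes HH: "HH_exact h" and HE: "HE_exact e h" and EH: "EH_exact e h" and EE: "EE_exact e"
begin

lemma bracket_E_E_exact:
  "a \<in> {1..n} \<Longrightarrow> b \<in> {1..n} \<Longrightarrow> c \<in> {1..n} \<Longrightarrow> d \<in> {1..n} \<Longrightarrow> br (E' a b) (E' c d) = ee_rhs E' a b c d"
  using EE unfolding EE_exact_def by (simp add: defect_EE_def)

lemma lift_span_bracket_closed:
  assumes "x \<in> lift_span" and "y \<in> lift_span"
  shows "br x y \<in> lift_span"
proof (rule bracket_span_closed[OF _ assms])
  have gen: "\<exists>a\<in>{1..n}. \<exists>b\<in>{1..n}. x = E' a b" if x: "x \<in> (\<lambda>(i, j). e i j) ` e_pairs n" for x
  proof -
    obtain p where p: "p \<in> e_pairs n" "x = (\<lambda>(i, j). e i j) p" using x by blast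
    obtain i j where "p = (i, j)" by (cases p)
    with p have ij: "(i, j) \<in> e_pairs n" "x = e i j" by auto
    then have "x = E' i j" by (simp add: e_pairs_def ext_E_def)
    moreover have "i \<in> {1..n}" "j \<in> {1..n}" using ij(1) by (auto simp: e_pairs_def)
    ultimately show ?thesis by blast
  qed
  have gens: "(\<exists>a\<in>{1..n}. \<exists>b\<in>{1..n}. z = E' a b) \<or> (\<exists>k\<in>{1..n}. z = h k)"
    if "z \<in> (\<lambda>(i, j). e i j) ` e_pairs n \<union> h ` {1..n}" for z
    using that gen by blast
  fix x y assume "x \<in> (\<lambda>(i, j). e i j) ` e_pairs n \<union> h ` {1..n}" "y \<in> (\<lambda>(i, j). e i j) ` e_pairs n \<union> h ` {1..n}"
  from gens[OF this(1)] gens[OF this(2)] show "br x y \<in> lift_span"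
  proof (elim disjE bexE)
    fix a b c d assume "a \<in> {1..n}" "b \<in> {1..n}" "x = E' a b" "c \<in> {1..n}" "d \<in> {1..n}" "y = E' c d"
    then show ?thesis by (metis bracket_E_E_exact ee_rhs_E'_in_lift_span)
  next
    fix a b k assume "a \<in> {1..n}" "b \<in> {1..n}" "x = E' a b" "k \<in> {1..n}" "y = h k"
    then show ?thesis by (metis bracket_E_h_exact[OF HH HE EH] eh_rhs_h_in_lift_span)
  next
    fix a b k assume "k \<in> {1..n}" "x = h k" "a \<in> {1..n}" "b \<in> {1..n}" "y = E' a b"
    then show ?thesis by (metis bracket_h_E_exact[OF HH HE EH] eh_rhs_h_in_lift_span vs.span_neg)
  next
    fix k l assume "k \<in> {1..n}" "x = h k" "l \<in> {1..n}" "y = h l"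
    then show ?thesis by (metis dHH_zero[OF HH] vs.span_zero)
  qed
qed

lemma e_table_lifts: "e_table n (=) br e h"
  unfolding e_table_iff
proof (intro conjI allI impI)
  have E'_eq: "E' i j = e i j" if "i < j" for i j using that by (simp add: ext_E_def)
  fix i j k l
  assume "1 \<le> i \<and> i < j \<and> j \<le> n \<and> 1 \<le> k \<and> k < l \<and> l \<le> n"
  then show "br (e i j) (e k l) = ee_rhs E' i j k l"
    using bracket_E_E_exact[of i j k l] E'_eq[of i j] E'_eq[of k l] by simp
next
  have E'_eq: "E' i j = e i j" if "i < j" for i j using that by (simp add: ext_E_def)
  fix i j k assume "1 \<le> i \<and> i < j \<and> j \<le> n \<and> 1 \<le> k \<and> k \<le> n"
  then show "br (e i j) (h k) = eh_rhs h i j k" and "br (h k) (e i j) = - eh_rhs h i j k"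
    using bracket_E_h_exact[OF HH HE EH, of i j k] bracket_h_E_exact[OF HH HE EH, of i j k] E'_eq[of i j]
    by simp_all
next
  fix k l assume "1 \<le> k \<and> k \<le> n \<and> 1 \<le> l \<and> l \<le> n"
  then show "br (h k) (h l) = 0" using dHH_zero[OF HH, of k l] by simp
qed

end

end

context e_extension
begin

abbreviation lifts :: "(nat \<Rightarrow> nat \<Rightarrow> 'a) \<Rightarrow> (nat \<Rightarrow> 'a) \<Rightarrow> bool" where
  "lifts e h \<equiv> e_lifts scale br n Eb Hb X e h"

lemma liftsI:
  "(\<And>i j. (i, j) \<in> e_pairs n \<Longrightarrow> e i j - Eb i j \<in> I) \<Longrightarrow> (\<And>k. k \<in> {1..n} \<Longrightarrow> h k - Hb k \<in> I) \<Longrightarrow> lifts e h"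
  by (intro e_lifts.intro e_extension_axioms e_lifts_axioms.intro leibniz_alg_axioms)

lemma HH_exact_lift:
  assumes "lifts e h"
  obtains h' where "lifts e h'" "HH_exact h'"
proof
  interpret L: e_lifts scale br n Eb Hb X e h by (fact assms)
  define h' where "h' = (\<lambda>k. h k - (\<Sum>l\<in>{1..n}. scale (top_coeff (L.dHH k l)) (X l)))"
  show lift: "lifts e h'"
  proof (rule liftsI)
    fix k assume "k \<in> {1..n}"
    have "h' k - Hb k = (h k - Hb k) - (\<Sum>l\<in>{1..n}. scale (top_coeff (L.dHH k l)) (X l))"
      by (simp add: h'_def algebra_simps)
    also have "\<dots> \<in> I"
      using L.h_lift[OF \<open>k \<in> {1..n}\<close>] correction_in_square_ideal by (rule square_ideal_diff)
    finally show "h' k - Hb k \<in> I" .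
  qed (fact L.e_lift)
  interpret L': e_lifts scale br n Eb Hb X e h' by (fact lift)
  show "HH_exact h'"
    unfolding HH_exact_def
  proof (intro ballI)
    fix k l assume kl: "k \<in> {1..n}" "l \<in> {1..n}"
    have "br (h' k) (h' l) = br (h k) (Hb l) - scale (top_coeff (L.dHH k l)) Xtop"
      using L'.bracket_h_right[OF kl(2)] bracket_correction_Hb[OF kl(2)] by (simp add: h'_def)
    also have "\<dots> = 0"
      using L.bracket_h_right[OF kl(2)] scale_top_coeff[OF L.dHH_invariant[OF kl]] by simp
    finally show "br (h' k) (h' l) = 0" .
  qed
qed

lemma HE_exact_lift:
  assumes "lifts e h" and "HH_exact h"
  obtains h' where "lifts e h'" "HH_exact h'" "HE_exact e h'"
proof
  interpret L: e_lifts scale br n Eb Hb X e h by (fact assms(1))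
  define G where "G = L.HE_correction"
  have G: "G k \<in> invariants" if "k \<in> {1..n}" for k
    unfolding G_def by (rule L.HE_correction_invariant[OF assms(2) that])
  have G_I: "G k \<in> I" if "k \<in> {1..n}" for k
    using G[OF that] invariants_subset_square_ideal by blast
  define h' where "h' = (\<lambda>k. h k + G k)"
  show lift: "lifts e h'"
  proof (rule liftsI)
    fix k assume "k \<in> {1..n}"
    have "h' k - Hb k = (h k - Hb k) + G k" by (simp add: h'_def)
    also have "\<dots> \<in> I" using L.h_lift[OF \<open>k \<in> {1..n}\<close>] G_I[OF \<open>k \<in> {1..n}\<close>] by (rule square_ideal_add)
    finally show "h' k - Hb k \<in> I" .
  qed (fact L.e_lift)
  show "HH_exact h'"
    unfolding HH_exact_def
  proof (intro ballI)
    fix k l assume kl: "k \<in> {1..n}" "l \<in> {1..n}"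
    have "br (h' k) (h' l) = br (h' k) (h l)"
      by (rule bracket_cong_right) (simp add: h'_def G_I[OF kl(2)])
    also have "\<dots> = br (h k) (h l) + br (G k) (h l)" by (simp add: h'_def bracket_add_left)
    also have "\<dots> = 0"
      using L.dHH_zero[OF assms(2) kl] bracket_invariants_left[OF G[OF kl(1)]] by simp
    finally show "br (h' k) (h' l) = 0" .
  qed
  show "HE_exact e h'"
    unfolding HE_exact_def
  proof (intro ballI)
    fix k a b assume idx: "k \<in> {1..n}" "a \<in> {1..n}" "b \<in> {1..n}"
    have "defect_HE br e h' k a b
        = (br (h k) (L.E' a b) + eh_rhs h a b k) + (br (G k) (L.E' a b) + eh_rhs G a b k)"
      unfolding defect_HE_def h'_def eh_rhs_add bracket_add_left by (simp only: ac_simps)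
    also have "\<dots> = L.dHE k a b + br (G k) (L.E' a b) + eh_rhs G a b k"
      by (simp add: defect_HE_def)
    also have "\<dots> = 0"
      using L.dHE_shape[OF assms(2) idx] bracket_invariants_left[OF G[OF idx(1)]] by (simp add: G_def)
    finally show "defect_HE br e h' k a b = 0" .
  qed
qed

lemma EH_exact_lift:
  assumes "lifts e h" and "HH_exact h" and "HE_exact e h"
  obtains e' where "lifts e' h" "HE_exact e' h" "EH_exact e' h"
proof
  interpret L: e_lifts scale br n Eb Hb X e h by (fact assms(1))
  define e' where "e' = (\<lambda>a b. e a b - (\<Sum>k\<in>{1..n}. scale (top_coeff (L.dEH a b k)) (X k)))"
  show lift: "lifts e' h"
  proof (rule liftsI)
    fix i j assume "(i, j) \<in> e_pairs n"
    have "e' i j - Eb i j = (e i j - Eb i j) - (\<Sum>k\<in>{1..n}. scale (top_coeff (L.dEH i j k)) (X k))"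
      by (simp add: e'_def algebra_simps)
    also have "\<dots> \<in> I"
      using L.e_lift[OF \<open>(i, j) \<in> e_pairs n\<close>] correction_in_square_ideal by (rule square_ideal_diff)
    finally show "e' i j - Eb i j \<in> I" .
  qed (fact L.h_lift)
  interpret L': e_lifts scale br n Eb Hb X e' h by (fact lift)
  show "HE_exact e' h"
    using assms(3) L'.bracket_E_right L.bracket_E_right unfolding HE_exact_def defect_HE_def by simp
  have zero: "L'.dEH a b k = 0" if ab: "a < b" "a \<in> {1..n}" "b \<in> {1..n}" and k: "k \<in> {1..n}" for a b k
  proof -
    have "br (e' a b) (h k) = br (e a b) (Hb k) - scale (top_coeff (L.dEH a b k)) Xtop"
      using L'.bracket_h_right[OF k] bracket_correction_Hb[OF k] by (simp add: e'_def)
    also have "\<dots> = br (e a b) (h k) - L.dEH a b k"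
      using L.bracket_h_right[OF k] scale_top_coeff[OF L.dEH_invariant[OF assms(2) ab(2,3) k]] by simp
    finally show ?thesis using ab(1) by (simp add: defect_EH_def ext_E_def)
  qed
  then show "EH_exact e' h"
    unfolding EH_exact_def
  proof (intro ballI)
    fix a b k assume idx: "a \<in> {1..n}" "b \<in> {1..n}" "k \<in> {1..n}"
    consider "a < b" | "a = b" | "b < a" by linarith
    then show "L'.dEH a b k = 0"
    proof cases
      case 3
      then show ?thesis using zero[of b a k] idx L'.dEH_swap[of a b k] by simp
    qed (use zero idx in simp_all)
  qed
qed

lemma EE_exact_lift:
  assumes "lifts e h" and "HH_exact h" and "HE_exact e h" and "EH_exact e h"
  obtains e' where "lifts e' h" "HE_exact e' h" "EH_exact e' h" "EE_exact e'"
proof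
  interpret L: e_lifts scale br n Eb Hb X e h by (fact assms(1))
  define F where "F = L.EE_correction"
  have F: "ext_E F a b \<in> invariants" if "a \<in> {1..n}" "b \<in> {1..n}" for a b
    unfolding F_def by (rule L.ext_EE_correction_invariant[OF assms(2-4) that])
  have F_I: "ext_E F a b \<in> I" if "a \<in> {1..n}" "b \<in> {1..n}" for a b
    using F[OF that] invariants_subset_square_ideal by blast
  define e' where "e' = (\<lambda>a b. e a b + F a b)"
  have ext_e': "ext_E e' a b = L.E' a b + ext_E F a b" for a b
    unfolding e'_def by (rule ext_E_add)
  show lift: "lifts e' h"
  proof (rule liftsI)
    fix i j assume ij: "(i, j) \<in> e_pairs n"
    then have "ext_E F i j = F i j" by (simp add: e_pairs_def ext_E_def)
    then have "e' i j - Eb i j = (e i j - Eb i j) + ext_E F i j" by (simp add: e'_def)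
    also have "\<dots> \<in> I"
      using L.e_lift[OF ij] F_I ij by (intro square_ideal_add) (auto simp: e_pairs_def)
    finally show "e' i j - Eb i j \<in> I" .
  qed (fact L.h_lift)
  interpret L': e_lifts scale br n Eb Hb X e' h by (fact lift)
  have E_right: "br x (L'.E' a b) = br x (L.E' a b)" if "a \<in> {1..n}" "b \<in> {1..n}" for x a b
    by (rule bracket_cong_right) (simp add: ext_e' F_I[OF that])
  have E_left: "br (L'.E' a b) y = br (L.E' a b) y" if "a \<in> {1..n}" "b \<in> {1..n}" for a b y
    by (simp add: ext_e' bracket_add_left bracket_invariants_left[OF F[OF that]])
  show "HE_exact e' h"
    using assms(3) unfolding HE_exact_def defect_HE_def by (simp add: E_right)
  show "EH_exact e' h"
    using assms(4) unfolding EH_exact_def defect_EH_def by (simp add: E_left)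
  show "EE_exact e'"
    unfolding EE_exact_def
  proof (intro ballI)
    fix a b c d assume idx: "a \<in> {1..n}" "b \<in> {1..n}" "c \<in> {1..n}" "d \<in> {1..n}"
    have "br (L'.E' a b) (L'.E' c d) = L.dEE a b c d + ee_rhs L.E' a b c d"
      by (simp add: E_left[OF idx(1,2)] E_right[OF idx(3,4)] L.bracket_E_E)
    also have "\<dots> = ee_rhs (\<lambda>a b. L.E' a b + ext_E F a b) a b c d"
      using L.dEE_shape[OF assms(2-4) idx] by (simp add: F_def ee_rhs_add add.commute)
    also have "(\<lambda>a b. L.E' a b + ext_E F a b) = L'.E'"
      by (intro ext) (simp only: ext_e')
    finally show "defect_EE br e' a b c d = 0" by (simp add: defect_EE_def)
  qed
qed

end

theorem mainTheorem8:
  fixes scale :: "complex \<Rightarrow> 'a::ab_group_add \<Rightarrow> 'a"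
    and br :: "'a \<Rightarrow> 'a \<Rightarrow> 'a"
    and n :: nat
    and Eb :: "nat \<Rightarrow> nat \<Rightarrow> 'a" and Hb :: "nat \<Rightarrow> 'a" and X :: "nat \<Rightarrow> 'a"
  assumes n3: "n \<ge> 3"
    and leib: "leibniz_algebra scale br"
    \<comment> \<open>the classes of Eb i j, Hb k form a basis of L/I\<close>
    and quot_span: "module.span scale ((\<lambda>(i, j). Eb i j) ` e_pairs n \<union> Hb ` {1..n}
                       \<union> square_ideal scale br) = UNIV"
    and quot_indep: "\<And>c d. (\<Sum>(i, j)\<in>e_pairs n. scale (c i j) (Eb i j))
                       + (\<Sum>k\<in>{1..n}. scale (d k) (Hb k)) \<in> square_ideal scale br
                     \<Longrightarrow> (\<forall>(i, j)\<in>e_pairs n. c i j = 0) \<and> (\<forall>k\<in>{1..n}. d k = 0)"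
    \<comment> \<open>with these classes, L/I has the multiplication table of e(n)\<close>
    and quot_table: "e_table n (\<lambda>x y. x - y \<in> square_ideal scale br) br Eb Hb"
    \<comment> \<open>X 1, ..., X (n+1) is a basis of I\<close>
    and X_inj: "inj_on X {1..n+1}"
    and X_indep: "\<not> module.dependent scale (X ` {1..n+1})"
    and X_span: "module.span scale (X ` {1..n+1}) = square_ideal scale br"
    \<comment> \<open>the right e(n)-module structure on I\<close>
    and X_E: "\<And>m i j. 1 \<le> m \<Longrightarrow> m \<le> n + 1 \<Longrightarrow> (i, j) \<in> e_pairs n \<Longrightarrow>
               br (X m) (Eb i j) = (if m = i then X j else if m = j then - X i else 0)"
    and X_H: "\<And>m k. 1 \<le> m \<Longrightarrow> m \<le> n + 1 \<Longrightarrow> 1 \<le> k \<Longrightarrow> k \<le> n \<Longrightarrow>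
               br (X m) (Hb k) = (if m = k then X (n + 1) else 0)"
  shows "\<exists>E H. (\<forall>(i, j)\<in>e_pairs n. E i j - Eb i j \<in> square_ideal scale br)
             \<and> (\<forall>k\<in>{1..n}. H k - Hb k \<in> square_ideal scale br)
             \<and> (\<forall>x\<in>module.span scale ((\<lambda>(i, j). E i j) ` e_pairs n \<union> H ` {1..n}).
                 \<forall>y\<in>module.span scale ((\<lambda>(i, j). E i j) ` e_pairs n \<union> H ` {1..n}).
                   br x y \<in> module.span scale ((\<lambda>(i, j). E i j) ` e_pairs n \<union> H ` {1..n}))
             \<and> e_table n (=) br E H"
proof -
  interpret leibniz_alg scale br by (rule leibniz_alg.intro[OF leib])
  have "X (n + 1) \<noteq> 0"
    using X_indep vs.dependent_zero[of "X ` {1..n+1}"] by force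
  then interpret e_extension scale br n Eb Hb X
    by unfold_locales (use assms in simp_all)
  have "lifts Eb Hb" by (rule liftsI) simp_all
  then obtain h1 where "lifts Eb h1" "HH_exact h1" by (rule HH_exact_lift)
  then obtain h where h: "lifts Eb h" "HH_exact h" "HE_exact Eb h" by (rule HE_exact_lift)
  then obtain e1 where e1: "lifts e1 h" "HE_exact e1 h" "EH_exact e1 h" by (rule EH_exact_lift)
  obtain e where e: "lifts e h" "HE_exact e h" "EH_exact e h" "EE_exact e"
    using e1(1) h(2) e1(2,3) by (rule EE_exact_lift)
  interpret e_lifts scale br n Eb Hb X e h by (fact e(1))
  show ?thesis
    using e_lift h_lift lift_span_bracket_closed[OF h(2) e(2-4)] e_table_lifts[OF h(2) e(2-4)]
    by blast
qed

end
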